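(* Let $q>2$ be prime, $p$ an integer not a multiple of $q$, and $a_n=e^{-i\pi p(n-1/2)^2/q}$ for integers $n$. For $1\le j<(q+2)/4$ let $\alpha_j=q-2j+1$. Then, as $q\to\infty$ (uniformly in $p$ and $j$), $$\Big|\sum_{l=1}^{\alpha_j-1}\log\big|a_{j+l}\overline{a_j}-1\big|\Big|=O\big(\sqrt{q\log^3 q}\big).$$
   Context: For these $j$ and $1\le l\le\alpha_j-1$ one has $a_{j+l}\ne a_j$, so all logarithms are finite. *)

theory Defs
  imports Complex_Main "HOL-Computational_Algebra.Primes"
begin

definition seq_a :: "nat \<Rightarrow> int \<Rightarrow> int \<Rightarrow> complex" where
  "seq_a q p n = exp (- \<i> * complex_of_real (pi * real_of_int p * (real_of_int n - 1/2)^2 / real q))"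

definition alpha :: "nat \<Rightarrow> int \<Rightarrow> int" where
  "alpha q j = int q - 2 * j + 1"

end

theory Submission
  imports Defs "HOL-Analysis.Harmonic_Numbers" "HOL-Computational_Algebra.Fundamental_Theorem_Algebra"
begin

text \<open>
  Write \<open>e\<^sub>q(x) = exp(2\<pi>ix/q)\<close>. Since \<open>a\<^sub>j\<^sub>+\<^sub>l cnj(a\<^sub>j) = e\<^sub>q(-p m(l))\<close> with the quadratic phase
  \<open>m(l) = l(l+2j-1)/2\<close>, the sum in the theorem is \<open>S = \<Sum>\<^sub>1\<^sub>\<le>\<^sub>l\<^sub>\<le>\<^sub>N F(-p m(l))\<close>, where
  \<open>N = \<alpha>\<^sub>j - 1 < q\<close> and \<open>F(r) = log\<bar>1 - e\<^sub>q(r)\<bar>\<close> (called \<open>logchord\<close> below).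

  The proof expands \<open>F\<close> in its finite Fourier series \<open>F(r) = \<Sum>\<^sub>k\<^sub><\<^sub>q c\<^sub>k e\<^sub>q(kr)\<close>, so that
  \<open>S = \<Sum>\<^sub>k c\<^sub>k T\<^sub>k\<close> with quadratic exponential sums \<open>T\<^sub>k = \<Sum>\<^sub>l e\<^sub>q(-kp m(l))\<close>. Then
  \<^item> \<open>c\<^sub>0 = log q / q\<close>, because \<open>\<Prod>\<^sub>0\<^sub><\<^sub>s\<^sub><\<^sub>q (1 - e\<^sub>q(s)) = q\<close>;
  \<^item> \<open>\<Sum>\<^sub>k\<^sub>\<noteq>\<^sub>0 \<bar>c\<^sub>k\<bar> = O(log q)\<close>: \<open>c\<^sub>k\<close> is a cosine sum of the symmetric, discretely concave
    profile \<open>log(2 sin(\<pi>s/q))\<close>, and summation by parts gives \<open>\<bar>c\<^sub>k\<bar> = O(1/k + 1/(q-k))\<close>;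
  \<^item> \<open>\<bar>T\<^sub>k\<bar> = O(\<surd>(q log q))\<close> for \<open>k \<noteq> 0\<close>, by Weyl differencing: the differenced phases are
    linear, and the resulting geometric sums are controlled by \<open>\<Sum>\<^sub>u (1/u + 1/(q-u))\<close>.
  Hence \<open>\<bar>S\<bar> \<le> log q + O(log q) \<cdot> O(\<surd>(q log q)) = O(\<surd>(q log\<^sup>3 q))\<close>, with explicit constant 30.
\<close>

text \<open>\<open>x cos x \<le> sin x\<close> on \<open>[0, \<pi>]\<close>; the derivative of \<open>sin x - x cos x\<close> is \<open>x sin x \<ge> 0\<close>.\<close>
lemma x_cos_le_sin:
  fixes x :: real assumes "0 \<le> x" "x \<le> pi"
  shows "x * cos x \<le> sin x"
proof -
  let ?g = "\<lambda>t::real. sin t - t * cos t"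
  have "?g 0 \<le> ?g x"
  proof (rule DERIV_nonneg_imp_nondecreasing[OF assms(1)])
    fix t :: real assume t: "0 \<le> t" "t \<le> x"
    have "DERIV ?g t :> cos t - (1 * cos t + t * (- sin t))"
      by (auto intro!: derivative_eq_intros)
    moreover have "0 \<le> t * sin t" using t assms by (auto intro!: mult_nonneg_nonneg sin_ge_zero)
    ultimately show "\<exists>y. DERIV ?g t :> y \<and> 0 \<le> y" by (intro exI[of _ "t * sin t"]) (auto simp: algebra_simps)
  qed
  then show ?thesis by simp
qed

lemma sinc_antimono:
  fixes x y :: real assumes "0 < x" "x \<le> y" "y \<le> pi"
  shows "sin y / y \<le> sin x / x"
proof -
  let ?g = "\<lambda>t::real. sin t / t"
  have "?g y \<le> ?g x"
  proof (rule DERIV_nonpos_imp_nonincreasing[OF assms(2)])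
    fix t :: real assume t: "x \<le> t" "t \<le> y"
    then have tp: "t > 0" using assms by auto
    have "DERIV ?g t :> (cos t * t - sin t * 1) / (t * t)"
      using tp by (auto intro!: derivative_eq_intros)
    moreover have "t * cos t \<le> sin t" using x_cos_le_sin[of t] t assms by auto
    ultimately show "\<exists>d. DERIV ?g t :> d \<and> d \<le> 0"
      by (intro exI[of _ "(cos t * t - sin t * 1) / (t * t)"])
        (auto simp: divide_nonpos_pos algebra_simps tp)
  qed
  then show ?thesis .
qed

lemma jordan_inequality:
  fixes x :: real assumes "0 \<le> x" "x \<le> pi/2"
  shows "2 / pi * x \<le> sin x"
proof (cases "x = 0")
  case False
  then have "x > 0" using assms by auto
  from sinc_antimono[OF this assms(2)] have "sin (pi/2) / (pi/2) \<le> sin x / x" by auto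
  then have "2 / pi \<le> sin x / x" by simp
  then show ?thesis using \<open>x > 0\<close> by (simp add: field_simps)
qed simp

text \<open>\<open>sin(a+b) sin(a-b) = sin\<^sup>2 a - sin\<^sup>2 b\<close>: the log-concavity of \<open>sin\<close> in discrete form.\<close>
lemma sin_add_mult_sin_diff: "sin ((a::real) + b) * sin (a - b) = (sin a)^2 - (sin b)^2"
proof -
  have "sin (a + b) * sin (a - b) = (sin a)^2 * (cos b)^2 - (cos a)^2 * (sin b)^2"
    unfolding sin_add sin_diff by (simp add: power2_eq_square algebra_simps)
  then show ?thesis by (simp add: cos_squared_eq algebra_simps)
qed

lemma norm_1_minus_cis: "cmod (1 - cis x) = 2 * \<bar>sin (x/2)\<bar>"
proof -
  have "(cmod (1 - cis x))^2 = (1 - cos x)^2 + (sin x)^2"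
    by (simp add: cmod_def)
  also have "\<dots> = 2 - 2 * cos x" by (simp add: power2_eq_square algebra_simps sin_squared_eq)
  also have "cos x = 1 - 2 * (sin (x/2))^2" using cos_double_sin[of "x/2"] by simp
  finally have "(cmod (1 - cis x))^2 = (2 * \<bar>sin (x/2)\<bar>)^2" by (simp add: power2_eq_square)
  then show ?thesis by (rule power2_eq_imp_eq) auto
qed

lemma sin_2pik_minus: "sin (2 * pi * real k - x) = - sin x"
proof -
  have "sin (2 * pi * real k) = 0" "cos (2 * pi * real k) = 1"
    using sin_2npi[of k] cos_2npi[of k] by (simp_all add: mult_ac)
  then show ?thesis by (simp add: sin_diff)
qed

lemma cos_2pik_minus: "cos (2 * pi * real k - x) = cos x"
proof -
  have "sin (2 * pi * real k) = 0" "cos (2 * pi * real k) = 1"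
    using sin_2npi[of k] cos_2npi[of k] by (simp_all add: mult_ac)
  then show ?thesis by (simp add: cos_diff)
qed

lemma pi_frac_le_half: "0 < q \<Longrightarrow> 2 * a \<le> q \<Longrightarrow> pi * real a / real q \<le> pi / 2"
proof -
  assume "0 < q" "2 * a \<le> q"
  then have "real a / real q \<le> 1/2" by (simp add: field_simps)
  then have "pi * (real a / real q) \<le> pi * (1/2)" by (intro mult_left_mono) auto
  then show ?thesis by simp
qed

lemma pi_frac_lt: "0 < q \<Longrightarrow> a < q \<Longrightarrow> pi * real a / real q < pi"
proof -
  assume "0 < q" "a < q"
  then have "real a / real q < 1" by (simp add: field_simps)
  then have "pi * (real a / real q) < pi * 1" by (intro mult_strict_left_mono) auto
  then show ?thesis by simp
qed

lemma pi_frac_mono: "a \<le> b \<Longrightarrow> pi * real a / real q \<le> pi * real b / real q"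
  by (intro divide_right_mono mult_left_mono) auto

lemma ln_ge_1:
  assumes "q \<ge> 3" shows "1 \<le> ln (real q)"
proof -
  have "ln (exp 1) \<le> ln (real q)" using exp_le assms by (subst ln_le_cancel_iff) auto
  then show ?thesis by simp
qed

text \<open>Every prime \<open>q > 2\<close> has the form \<open>2M + 3\<close>, the shape assumed by the symmetry arguments for the Fourier coefficients.\<close>
lemma odd_prime_form:
  fixes q :: nat
  assumes "prime q" "q > 2"
  obtains M where "q = 2*M+3"
proof -
  have "odd q" using assms by (intro prime_odd_nat) auto
  then obtain t where "q = 2*t+1" by (auto elim: oddE)
  then show ?thesis using assms by (intro that[of "t - 1"]) auto
qed

text \<open>\<open>\<Sum>\<^sub>u\<^sub><\<^sub>q (1/u + 1/(q-u)) = 2 H\<^sub>q\<^sub>-\<^sub>1 \<le> 2(1 + log q)\<close>.\<close>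
lemma reciprocal_pair_sum_le:
  assumes "q \<ge> 2"
  shows "(\<Sum>u\<in>{1..q-1}. (1 / real u + 1 / real (q - u))) \<le> 2 * (1 + ln (real q))"
proof -
  have r: "(\<Sum>u\<in>{1..q-1}. 1 / real (q - u)) = (\<Sum>u\<in>{1..q-1}. 1 / real u)"
  proof -
    have "(\<Sum>u\<in>{1..q-1}. 1 / real (q - u)) = (\<Sum>u\<in>{1..q-1}. 1 / real (q - (q - 1 + 1 - u)))"
      by (rule sum.atLeastAtMost_rev)
    also have "\<dots> = (\<Sum>u\<in>{1..q-1}. 1 / real u)" using assms by (intro sum.cong refl) auto
    finally show ?thesis .
  qed
  have h: "(\<Sum>u\<in>{1..q-1}. 1 / real u) = harm (q - 1)" unfolding harm_def by (simp add: divide_inverse)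
  have "harm (q - 1) - ln (real (q - 1)) \<le> harm 1 - ln (real (1::nat))"
    using assms by (intro euler_mascheroni_sequence_decreasing) auto
  then have "harm (q - 1) \<le> 1 + ln (real (q - 1))" by (simp add: harm_def)
  also have "ln (real (q - 1)) \<le> ln (real q)" using assms by (subst ln_le_cancel_iff) auto
  finally have "(harm (q-1) :: real) \<le> 1 + ln (real q)" by simp
  then show ?thesis using r h by (simp add: sum.distrib)
qed

section \<open>Additive characters modulo q\<close>

definition echar :: "nat \<Rightarrow> real \<Rightarrow> complex" where "echar q x = cis (2 * pi * x/q)"

lemma echar_add: "echar q (x + y) = echar q x * echar q y"
  by (simp add: echar_def cis_mult add_divide_distrib distrib_left)

lemma echar_pow: "echar q x ^ n = echar q (real n * x)"
  by (simp only: echar_def Complex.DeMoivre) (simp add: field_simps)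

lemma norm_echar [simp]: "norm (echar q x) = 1" by (simp add: echar_def)

lemma cnj_echar: "cnj (echar q x) = echar q (-x)" by (simp add: echar_def cis_cnj)

lemma echar_int_eq_1_iff:
  assumes "q > 0"
  shows "echar q (of_int t) = 1 \<longleftrightarrow> int q dvd t"
proof
  assume "int q dvd t"
  then obtain m where "t = int q * m" by auto
  then have "2 * pi * real_of_int t/real q = 2 * pi * real_of_int m" using assms by simp
  then show "echar q (of_int t) = 1" by (simp add: echar_def)
next
  assume "echar q (of_int t) = 1"
  then have "cos (2 * pi * of_int t/q) = 1" by (simp add: echar_def complex_eq_iff)
  then obtain n :: int where "2 * pi * of_int t/q = of_int n * 2 * pi" by (auto simp: cos_one_2pi_int)
  then have "real_of_int t = of_int n * real q" using assms by (simp add: field_simps)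
  then have "t = n * int q" by (metis of_int_eq_iff of_int_mult of_int_of_nat_eq)
  then show "int q dvd t" by simp
qed

lemma echar_periodic: "q > 0 \<Longrightarrow> echar q (of_int (int q * m) + x) = echar q x"
  using echar_int_eq_1_iff[of q "int q * m"] by (simp add: echar_add)

lemma echar_mod: "q > 0 \<Longrightarrow> echar q (of_int (t mod int q)) = echar q (of_int t)"
proof -
  assume q: "q > 0"
  have "t = int q * (t div int q) + t mod int q" by simp
  then have "echar q (of_int t) = echar q (of_int (int q * (t div int q)) + of_int (t mod int q))"
    by (metis of_int_add)
  then show ?thesis using echar_periodic[OF q] by simp
qed

lemma echar_orthogonality:
  assumes "q > 0"
  shows "(\<Sum>k<q. echar q (real k * of_int t)) = (if int q dvd t then of_nat q else 0)"
proof (cases "int q dvd t")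
  case True
  then have "echar q (real k * of_int t) = 1" for k
    using echar_pow[of q "of_int t" k] echar_int_eq_1_iff[OF assms, of t] by simp
  then show ?thesis using True by simp
next
  case False
  define z where "z = echar q (of_int t)"
  have z1: "z \<noteq> 1" using False echar_int_eq_1_iff[OF assms] z_def by simp
  have "(\<Sum>k<q. echar q (real k * of_int t)) = (\<Sum>k<q. z ^ k)" by (simp add: z_def echar_pow)
  also have "\<dots> = (z ^ q - 1) / (z - 1)" using z1 by (simp add: geometric_sum)
  also have "z ^ q = 1" unfolding z_def echar_pow
    using echar_int_eq_1_iff[OF assms, of "int q * t"] by simp
  finally show ?thesis using False by simp
qed

lemma norm_1_minus_echar:
  assumes "0 < u" "u < q"
  shows "cmod (1 - echar q (real u)) = 2 * sin (pi * real u / real q)"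
proof -
  have "cmod (1 - echar q (real u)) = 2 * \<bar>sin (2 * pi * real u / real q / 2)\<bar>"
    unfolding echar_def by (rule norm_1_minus_cis)
  also have "2 * pi * real u / real q / 2 = pi * real u / real q" by simp
  also have "sin (pi * real u / real q) > 0" using assms by (intro sin_gt_zero) (auto simp: field_simps)
  then have "\<bar>sin (pi * real u / real q)\<bar> = sin (pi * real u / real q)" by simp
  finally show ?thesis .
qed

text \<open>By Jordan's inequality, \<open>2/\<bar>1 - e\<^sub>q(u)\<bar> \<le> (q/2)(1/u + 1/(q-u))\<close>.\<close>
lemma inv_norm_1_minus_echar_le:
  assumes "0 < u" "u < q"
  shows "2 / cmod (1 - echar q (real u)) \<le> real q / 2 * (1 / real u + 1 / real (q - u))"
proof -
  define v where "v = min u (q - u)"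
  have v: "1 \<le> v" "2 * v \<le> q" using assms by (auto simp: v_def)
  have sv: "sin (pi * real u / real q) = sin (pi * real v / real q)"
  proof (cases "v = u")
    case False
    then have "v = q - u" by (auto simp: v_def)
    then have "pi * real v / real q = pi - pi * real u / real q" using assms by (simp add: of_nat_diff field_simps)
    then show ?thesis by simp
  qed simp
  have "2 / pi * (pi * real v / real q) \<le> sin (pi * real v / real q)"
    using v assms by (intro jordan_inequality) (auto simp: field_simps)
  then have low: "2 * real v / real q \<le> sin (pi * real v / real q)" by simp
  have pos: "0 < 2 * real v / real q" using v assms by auto
  have "2 / cmod (1 - echar q (real u)) = 1 / sin (pi * real v / real q)"
    using norm_1_minus_echar[OF assms] sv by simp
  also have "\<dots> \<le> 1 / (2 * real v / real q)"
  proof -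
    have "0 < sin (pi * real v / real q)" using low pos by linarith
    then have h: "0 < sin (pi * real v / real q) * (2 * real v / real q)" using pos by (rule mult_pos_pos)
    show ?thesis by (rule divide_left_mono[OF low]) (use h in auto)
  qed
  also have "\<dots> = real q / 2 * (1 / real v)" by simp
  also have "1 / real v \<le> 1 / real u + 1 / real (q - u)"
    using v assms by (cases "v = u") (auto simp: v_def min_def split: if_splits)
  then have "real q / 2 * (1 / real v) \<le> real q / 2 * (1 / real u + 1 / real (q - u))"
    by (intro mult_left_mono) auto
  finally show ?thesis .
qed

lemma inv_norm_1_minus_echar_int:
  assumes q: "q > 0" and nd: "\<not> int q dvd t"
  shows "2 / cmod (1 - echar q (of_int t)) \<le> real q / 2 * (1 / real (nat (t mod int q)) + 1 / real (q - nat (t mod int q)))"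
proof -
  define u where "u = nat (t mod int q)"
  have m: "t mod int q \<ge> 0" "t mod int q < int q" "t mod int q \<noteq> 0"
    using nd q by (auto simp: dvd_eq_mod_eq_0)
  have u: "0 < u" "u < q" "int u = t mod int q" using m unfolding u_def by auto
  have "echar q (of_int t) = echar q (real u)" using echar_mod[OF q, of t] u(3) by (metis of_int_of_nat_eq)
  then show ?thesis using inv_norm_1_minus_echar_le[OF u(1,2)] unfolding u_def by simp
qed

lemma echar_geometric_sum_le:
  assumes q: "q > 0" and nd: "\<not> int q dvd b"
  shows "cmod (\<Sum>l\<in>{u..v::int}. echar q (of_int (b * l))) \<le> 2 / cmod (1 - echar q (of_int b))"
proof (cases "u \<le> v")
  case False
  then show ?thesis by simp
next
  case True
  define n where "n = nat (v - u + 1)"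
  define z where "z = echar q (of_int b)"
  have z1: "z \<noteq> 1" using nd echar_int_eq_1_iff[OF q] z_def by simp
  have set: "{u..v} = (\<lambda>k. u + int k) ` {..<n}"
  proof (intro set_eqI iffI)
    fix x assume "x \<in> {u..v}" then show "x \<in> (\<lambda>k. u + int k) ` {..<n}"
      by (intro image_eqI[of _ _ "nat (x - u)"]) (auto simp: n_def)
  next
    fix x assume "x \<in> (\<lambda>k. u + int k) ` {..<n}" then show "x \<in> {u..v}" by (auto simp: n_def)
  qed
  have "(\<Sum>l\<in>{u..v}. echar q (of_int (b * l))) = (\<Sum>k<n. echar q (of_int (b * (u + int k))))"
    unfolding set by (subst sum.reindex) (auto simp: inj_on_def)
  also have "\<dots> = (\<Sum>k<n. echar q (of_int (b * u)) * z ^ k)"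
    by (intro sum.cong refl) (simp add: z_def echar_pow echar_add[symmetric] algebra_simps)
  also have "\<dots> = echar q (of_int (b * u)) * ((z ^ n - 1) / (z - 1))"
    using z1 by (simp add: sum_distrib_left[symmetric] geometric_sum)
  finally have eq: "(\<Sum>l\<in>{u..v}. echar q (of_int (b * l))) = echar q (of_int (b * u)) * ((z ^ n - 1) / (z - 1))" .
  have nz: "norm (z ^ n - 1) \<le> 2"
    using norm_triangle_ineq4[of "z ^ n" 1] by (simp add: z_def norm_power)
  have "cmod (echar q (of_int (b * u)) * ((z ^ n - 1) / (z - 1))) = cmod (z ^ n - 1) / cmod (1 - z)"
    by (simp add: norm_mult norm_divide norm_minus_commute)
  also have "\<dots> \<le> 2 / cmod (1 - z)" using nz z1 by (intro divide_right_mono) auto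
  finally show ?thesis unfolding eq z_def .
qed

lemma echar_interval_sum_le:
  assumes q: "q > 0" and nd: "\<not> int q dvd b"
  shows "cmod (\<Sum>l\<in>{u..v::int}. echar q (of_int (b * l)))
         \<le> real q / 2 * (1 / real (nat (b mod int q)) + 1 / real (q - nat (b mod int q)))"
  using echar_geometric_sum_le[OF q nd] inv_norm_1_minus_echar_int[OF q nd] by (rule order_trans)

section \<open>The function log|1 - e_q| and its finite Fourier expansion\<close>

definition logchord :: "nat \<Rightarrow> int \<Rightarrow> real" where "logchord q r = ln (cmod (1 - echar q (of_int r)))"

text \<open>Its finite Fourier coefficients \<open>c\<^sub>k = (1/q) \<Sum>\<^sub>0\<^sub><\<^sub>s\<^sub><\<^sub>q logchord(s) e\<^sub>q(-ks)\<close> (the value at \<open>s = 0\<close> is omitted).\<close>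
definition fcoef :: "nat \<Rightarrow> nat \<Rightarrow> complex" where
  "fcoef q k = (\<Sum>s\<in>{1..q-1}. of_real (logchord q (int s)) * echar q (- (real k * real s))) / of_nat q"

lemma logchord_mod: "q > 0 \<Longrightarrow> logchord q (r mod int q) = logchord q r"
  unfolding logchord_def by (simp add: echar_mod)

lemma logchord_fourier_inversion:
  assumes q: "q > 0" and nd: "\<not> int q dvd r"
  shows "of_real (logchord q r) = (\<Sum>k<q. fcoef q k * echar q (real k * of_int r))"
proof -
  define s0 where "s0 = nat (r mod int q)"
  have m: "r mod int q \<ge> 0" "r mod int q < int q" "r mod int q \<noteq> 0"
    using nd q by (auto simp: dvd_eq_mod_eq_0)
  have s0: "s0 \<in> {1..q-1}" "int s0 = r mod int q"
    using m unfolding s0_def by auto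
  have "(\<Sum>k<q. fcoef q k * echar q (real k * of_int r)) =
        (\<Sum>k<q. \<Sum>s\<in>{1..q-1}. of_real (logchord q (int s)) * echar q (real k * of_int (r - int s))) / of_nat q"
  proof -
    have "fcoef q k * echar q (real k * of_int r) = (\<Sum>s\<in>{1..q-1}. of_real (logchord q (int s)) * echar q (real k * of_int (r - int s))) / of_nat q" for k
    proof -
      have "echar q (- (real k * real s)) * echar q (real k * of_int r) = echar q (real k * of_int (r - int s))" for s
        by (simp add: echar_add[symmetric] algebra_simps)
      then show ?thesis unfolding fcoef_def by (simp add: sum_distrib_right mult.assoc)
    qed
    then show ?thesis by (simp add: sum_divide_distrib)
  qed
  also have "\<dots> = (\<Sum>s\<in>{1..q-1}. of_real (logchord q (int s)) * (\<Sum>k<q. echar q (real k * of_int (r - int s)))) / of_nat q"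
    by (simp add: sum_distrib_left sum.swap[of _ "{..<q}"])
  also have "\<dots> = (\<Sum>s\<in>{1..q-1}. if s = s0 then of_real (logchord q (int s)) * of_nat q else 0) / of_nat q"
  proof -
    have "int q dvd (r - int s) \<longleftrightarrow> s = s0" if "s \<in> {1..q-1}" for s
    proof -
      have "int q dvd (r - int s) \<longleftrightarrow> r mod int q = int s mod int q" by (simp add: mod_eq_dvd_iff)
      also have "int s mod int q = int s" using that by auto
      finally show ?thesis using s0 by auto
    qed
    then have "of_real (logchord q (int s)) * (\<Sum>k<q. echar q (real k * of_int (r - int s))) = (if s = s0 then of_real (logchord q (int s)) * of_nat q else 0)" if "s \<in> {1..q-1}" for s
      using echar_orthogonality[OF q, of "r - int s"] that by (simp del: of_int_diff)
    then show ?thesis by (intro arg_cong2[where f="(/)"] sum.cong refl) auto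
  qed
  also have "\<dots> = of_real (logchord q (int s0))" using s0 q by (simp add: sum.delta)
  also have "logchord q (int s0) = logchord q r" using s0 logchord_mod[OF q] by simp
  finally show ?thesis by simp
qed

lemma logchord_sum_fourier:
  assumes q: "q > 0" and nz: "\<And>l. l \<in> A \<Longrightarrow> \<not> int q dvd g l"
  shows "of_real (\<Sum>l\<in>A. logchord q (g l))
         = (\<Sum>k<q. fcoef q k * (\<Sum>l\<in>A. echar q (real k * of_int (g l))))"
proof -
  have "of_real (\<Sum>l\<in>A. logchord q (g l)) = (\<Sum>l\<in>A. \<Sum>k<q. fcoef q k * echar q (real k * of_int (g l)))"
    unfolding of_real_sum by (intro sum.cong refl logchord_fourier_inversion q nz)
  also have "\<dots> = (\<Sum>k<q. fcoef q k * (\<Sum>l\<in>A. echar q (real k * of_int (g l))))"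
    by (subst sum.swap) (simp add: sum_distrib_left)
  finally show ?thesis .
qed

lemma logchord_formula: "0 < s \<Longrightarrow> s < q \<Longrightarrow> logchord q (int s) = ln (2 * sin (pi * real s / real q))"
  unfolding logchord_def using norm_1_minus_echar[of s q] by simp

lemma logchord_sym:
  assumes "0 < s" "s < q" shows "logchord q (int (q - s)) = logchord q (int s)"
proof -
  have "pi * real (q - s) / real q = pi - pi * real s / real q" using assms by (simp add: of_nat_diff field_simps)
  then have e: "sin (pi * real (q - s) / real q) = sin (pi * real s / real q)" by simp
  have h1: "logchord q (int (q - s)) = ln (2 * sin (pi * real (q - s) / real q))" by (rule logchord_formula) (use assms in auto)
  have h2: "logchord q (int s) = ln (2 * sin (pi * real s / real q))" by (rule logchord_formula) (use assms in auto)
  show ?thesis unfolding h1 h2 e ..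
qed

section \<open>Summation by parts and weighted trigonometric sums\<close>

lemma abel_identity:
  fixes D x :: "nat \<Rightarrow> real"
  shows "(\<Sum>s=a..a+n. D s * x s) = D (a+n) * (\<Sum>u=a..a+n. x u) + (\<Sum>s=a..<a+n. (D s - D (Suc s)) * (\<Sum>u=a..s. x u))"
proof (induction n)
  case 0 then show ?case by simp
next
  case (Suc n)
  have "(\<Sum>s=a..a+Suc n. D s * x s) = (\<Sum>s=a..a+n. D s * x s) + D (Suc (a+n)) * x (Suc (a+n))"
    by simp
  also note Suc.IH
  also have "(\<Sum>u=a..a+Suc n. x u) = (\<Sum>u=a..a+n. x u) + x (Suc (a+n))" by simp
  moreover have "(\<Sum>s=a..<a+Suc n. (D s - D (Suc s)) * (\<Sum>u=a..s. x u)) =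
     (\<Sum>s=a..<a+n. (D s - D (Suc s)) * (\<Sum>u=a..s. x u)) + (D (a+n) - D (Suc (a+n))) * (\<Sum>u=a..a+n. x u)"
    by simp
  ultimately show ?case by (simp add: algebra_simps)
qed

lemma abel_bound:
  fixes D x :: "nat \<Rightarrow> real"
  assumes nonneg: "\<And>s. s \<in> {a..a+n} \<Longrightarrow> 0 \<le> D s"
    and anti: "\<And>s. a \<le> s \<Longrightarrow> s < a+n \<Longrightarrow> D (Suc s) \<le> D s"
    and part: "\<And>t. t \<in> {a..a+n} \<Longrightarrow> \<bar>\<Sum>u=a..t. x u\<bar> \<le> K"
  shows "\<bar>\<Sum>s=a..a+n. D s * x s\<bar> \<le> K * D a"
proof -
  have "\<bar>\<Sum>s=a..a+n. D s * x s\<bar> \<le> \<bar>D (a+n) * (\<Sum>u=a..a+n. x u)\<bar> + \<bar>\<Sum>s=a..<a+n. (D s - D (Suc s)) * (\<Sum>u=a..s. x u)\<bar>"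
    unfolding abel_identity by (rule abs_triangle_ineq)
  also have "\<bar>D (a+n) * (\<Sum>u=a..a+n. x u)\<bar> \<le> D (a+n) * K"
    using nonneg[of "a+n"] part[of "a+n"] by (simp add: abs_mult mult_left_mono)
  also have "\<bar>\<Sum>s=a..<a+n. (D s - D (Suc s)) * (\<Sum>u=a..s. x u)\<bar> \<le> (\<Sum>s=a..<a+n. (D s - D (Suc s)) * K)"
  proof -
    have "\<bar>\<Sum>s=a..<a+n. (D s - D (Suc s)) * (\<Sum>u=a..s. x u)\<bar> \<le> (\<Sum>s=a..<a+n. \<bar>(D s - D (Suc s)) * (\<Sum>u=a..s. x u)\<bar>)"
      by (rule sum_abs)
    also have "\<dots> \<le> (\<Sum>s=a..<a+n. (D s - D (Suc s)) * K)"
    proof (rule sum_mono)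
      fix s assume s: "s \<in> {a..<a+n}"
      then have "0 \<le> D s - D (Suc s)" using anti[of s] by auto
      moreover have "\<bar>\<Sum>u=a..s. x u\<bar> \<le> K" using part[of s] s by auto
      ultimately show "\<bar>(D s - D (Suc s)) * (\<Sum>u=a..s. x u)\<bar> \<le> (D s - D (Suc s)) * K"
        by (simp add: abs_mult mult_left_mono)
    qed
    finally show ?thesis .
  qed
  also have "(\<Sum>s=a..<a+n. (D s - D (Suc s)) * K) = (D a - D (a+n)) * K"
  proof -
    have "(\<Sum>s=a..<a+n. (D s - D (Suc s))) = D a - D (a+n)"
      using sum_Suc_diff'[of a "a+n" "\<lambda>s. - D s"] by simp
    then show ?thesis by (simp add: sum_distrib_right[symmetric])
  qed
  finally show ?thesis by (simp add: algebra_simps)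
qed

text \<open>Product-to-sum rule that makes \<open>\<Sum>\<^sub>s sin((s+1/2)\<theta>)\<close> telescope.\<close>
lemma sin_prod_telescope:
  fixes \<theta> t :: real
  shows "2 * sin (\<theta>/2) * sin ((t + 1/2) * \<theta>) = cos (t * \<theta>) - cos ((t + 1) * \<theta>)"
proof -
  have e1: "\<theta>/2 - (t + 1/2) * \<theta> = - (t * \<theta>)" and e2: "\<theta>/2 + (t + 1/2) * \<theta> = (t + 1) * \<theta>"
    by (simp_all add: algebra_simps)
  show ?thesis unfolding mult.assoc sin_times_sin e1 e2 by simp
qed

lemma sin_partial_sum:
  fixes \<theta> :: real assumes "sin (\<theta>/2) \<noteq> 0"
  shows "(\<Sum>s=a..a+n. sin ((real s + 1/2) * \<theta>)) = (cos (real a * \<theta>) - cos ((real (a+n) + 1) * \<theta>)) / (2 * sin (\<theta>/2))"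
proof (induction n)
  case 0
  have "2 * sin (\<theta>/2) * sin ((real a + 1/2) * \<theta>) = cos (real a * \<theta>) - cos ((real a + 1) * \<theta>)"
    by (rule sin_prod_telescope)
  then show ?case using assms by (simp add: field_simps)
next
  case (Suc n)
  have "2 * sin (\<theta>/2) * sin ((real (Suc (a+n)) + 1/2) * \<theta>) = cos ((real (a+n) + 1) * \<theta>) - cos ((real (Suc (a+n)) + 1) * \<theta>)"
    using sin_prod_telescope[of \<theta> "real (Suc (a+n))"] by (simp add: add_ac)
  then have "sin ((real (Suc (a+n)) + 1/2) * \<theta>) = (cos ((real (a+n) + 1) * \<theta>) - cos ((real (Suc (a+n)) + 1) * \<theta>)) / (2 * sin (\<theta>/2))"
    using assms by (simp add: field_simps)
  then show ?case using Suc.IH by (simp add: add_divide_distrib[symmetric] diff_divide_distrib[symmetric])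
qed

lemma sin_partial_bound:
  fixes \<theta> :: real assumes \<theta>: "0 < \<theta>" "\<theta> \<le> pi" and "a \<le> t"
  shows "\<bar>\<Sum>s=a..t. sin ((real s + 1/2) * \<theta>)\<bar> \<le> pi / \<theta>"
proof -
  have j: "2 / pi * (\<theta>/2) \<le> sin (\<theta>/2)" using \<theta> by (intro jordan_inequality) auto
  have "0 < 2 / pi * (\<theta>/2)" using \<theta> by simp
  with j have sp: "sin (\<theta>/2) > 0" by linarith
  have t: "t = a + (t - a)" using assms by simp
  have "(\<Sum>s=a..t. sin ((real s + 1/2) * \<theta>)) = (cos (real a * \<theta>) - cos ((real t + 1) * \<theta>)) / (2 * sin (\<theta>/2))"
    using sin_partial_sum[of \<theta> a "t - a"] sp t by simp
  also have "\<bar>\<dots>\<bar> \<le> 2 / (2 * sin (\<theta>/2))"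
  proof -
    have "\<bar>cos (real a * \<theta>) - cos ((real t + 1) * \<theta>)\<bar> \<le> 2"
      using abs_cos_le_one[of "real a * \<theta>"] abs_cos_le_one[of "(real t + 1) * \<theta>"] by arith
    then have "\<bar>cos (real a * \<theta>) - cos ((real t + 1) * \<theta>)\<bar> / (2 * sin (\<theta>/2)) \<le> 2 / (2 * sin (\<theta>/2))"
      using sp by (intro divide_right_mono) auto
    then show ?thesis using sp by (simp add: abs_divide)
  qed
  also have "\<dots> = 1 / sin (\<theta>/2)" by simp
  also have "\<dots> \<le> 1 / (\<theta> / pi)" using j \<theta> sp by (intro divide_left_mono) (auto simp: field_simps)
  finally show ?thesis by simp
qed

text \<open>Short range: while \<open>s\<theta> \<le> 1\<close> we simply use \<open>\<bar>sin x\<bar> \<le> x\<close> and \<open>D s \<le> 1/s\<close>.\<close>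
lemma weighted_sin_sum_short:
  fixes \<theta> :: real and D :: "nat \<Rightarrow> real"
  assumes \<theta>: "0 < \<theta>" and m: "real m * \<theta> \<le> 1"
    and D0: "\<And>s. 1 \<le> s \<Longrightarrow> s \<le> m \<Longrightarrow> 0 \<le> D s"
    and D1: "\<And>s. 1 \<le> s \<Longrightarrow> s \<le> m \<Longrightarrow> D s \<le> 1 / real s"
  shows "\<bar>\<Sum>s=1..m. D s * sin ((real s + 1/2) * \<theta>)\<bar> \<le> 3/2"
proof -
  have "\<bar>\<Sum>s=1..m. D s * sin ((real s + 1/2) * \<theta>)\<bar> \<le> (\<Sum>s=1..m. \<bar>D s * sin ((real s + 1/2) * \<theta>)\<bar>)"
    by (rule sum_abs)
  also have "\<dots> \<le> (\<Sum>s=1..m. 3/2 * \<theta>)"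
  proof (rule sum_mono)
    fix s assume s: "s \<in> {1..m}"
    then have Ds: "0 \<le> D s" "D s \<le> 1 / real s" using D0 D1 by auto
    moreover have "\<bar>sin ((real s + 1/2) * \<theta>)\<bar> \<le> (real s + 1/2) * \<theta>"
      using abs_sin_x_le_abs_x[of "(real s + 1/2) * \<theta>"] \<theta> by simp
    ultimately have "\<bar>D s * sin ((real s + 1/2) * \<theta>)\<bar> \<le> 1 / real s * ((real s + 1/2) * \<theta>)"
      unfolding abs_mult by (intro mult_mono) auto
    also have "\<dots> = (1 + 1 / (2 * real s)) * \<theta>" using s by (simp add: field_simps)
    also have "\<dots> \<le> 3/2 * \<theta>" using s \<theta> by (intro mult_right_mono) (auto simp: field_simps)
    finally show "\<bar>D s * sin ((real s + 1/2) * \<theta>)\<bar> \<le> 3/2 * \<theta>" .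
  qed
  also have "\<dots> = 3/2 * (real m * \<theta>)" by simp
  also have "\<dots> \<le> 3/2" using m by (simp add: mult.commute)
  finally show ?thesis .
qed

text \<open>Long range: once \<open>(m+1)\<theta> > 1\<close>, Abel summation against the bounded partial
  sums of \<open>sin((s+1/2)\<theta>)\<close> gives \<open>(\<pi>/\<theta>) D(m+1) \<le> \<pi>\<close>.\<close>
lemma weighted_sin_sum_tail:
  fixes \<theta> :: real and D :: "nat \<Rightarrow> real"
  assumes \<theta>: "0 < \<theta>" "\<theta> \<le> pi" and m: "1 < (real m + 1) * \<theta>"
    and D0: "\<And>s. Suc m \<le> s \<Longrightarrow> s \<le> Suc m + n \<Longrightarrow> 0 \<le> D s"
    and D1: "D (Suc m) \<le> 1 / (real m + 1)"
    and Dm: "\<And>s. Suc m \<le> s \<Longrightarrow> s < Suc m + n \<Longrightarrow> D (Suc s) \<le> D s"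
  shows "\<bar>\<Sum>s=Suc m..Suc m + n. D s * sin ((real s + 1/2) * \<theta>)\<bar> \<le> pi"
proof -
  have "\<bar>\<Sum>s=Suc m..Suc m + n. D s * sin ((real s + 1/2) * \<theta>)\<bar> \<le> pi / \<theta> * D (Suc m)"
    using D0 Dm sin_partial_bound[OF \<theta>] by (intro abel_bound) auto
  also have "\<dots> \<le> pi / \<theta> * (1 / (real m + 1))"
    using D1 \<theta> by (intro mult_left_mono) auto
  also have "\<dots> = pi / ((real m + 1) * \<theta>)" by simp
  also have "\<dots> \<le> pi / 1" using m \<theta> pi_gt_zero by (intro divide_left_mono) auto
  finally show ?thesis by simp
qed

text \<open>Sums \<open>\<Sum>\<^sub>s D(s) sin((s+1/2)\<theta>)\<close> with nonnegative, nonincreasing weights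
  \<open>D(s) \<le> 1/s\<close> are bounded uniformly in \<open>\<theta>\<close> and the length: split at \<open>s \<approx> 1/\<theta>\<close>.\<close>
lemma weighted_sin_sum_bound:
  fixes \<theta> :: real and D :: "nat \<Rightarrow> real"
  assumes \<theta>: "0 < \<theta>" "\<theta> \<le> pi"
  and D0: "\<And>s. 1 \<le> s \<Longrightarrow> s \<le> M \<Longrightarrow> 0 \<le> D s"
  and D1: "\<And>s. 1 \<le> s \<Longrightarrow> s \<le> M \<Longrightarrow> D s \<le> 1 / real s"
  and Dm: "\<And>s. 1 \<le> s \<Longrightarrow> s < M \<Longrightarrow> D (Suc s) \<le> D s"
  shows "\<bar>\<Sum>s=1..M. D s * sin ((real s + 1/2) * \<theta>)\<bar> \<le> 3/2 + pi"
proof -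
  define m where "m = nat \<lfloor>1 / \<theta>\<rfloor>"
  have rm: "real m = of_int \<lfloor>1 / \<theta>\<rfloor>" unfolding m_def using \<theta> by simp
  have "real m \<le> 1 / \<theta>" unfolding rm by (rule of_int_floor_le)
  then have m1: "real m * \<theta> \<le> 1" using \<theta> by (simp add: field_simps)
  have "1 / \<theta> < real m + 1" unfolding rm using floor_correct[of "1 / \<theta>"] by simp
  then have m2: "1 < (real m + 1) * \<theta>" using \<theta> by (simp add: field_simps)
  show ?thesis
  proof (cases "M \<le> m")
    case True
    have "real M * \<theta> \<le> 1" using True \<theta> m1 by (meson mult_right_mono of_nat_le_iff order.trans less_imp_le)
    then have "\<bar>\<Sum>s=1..M. D s * sin ((real s + 1/2) * \<theta>)\<bar> \<le> 3/2"
      using \<theta> D0 D1 by (intro weighted_sin_sum_short) auto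
    then show ?thesis using pi_gt_zero by linarith
  next
    case False
    define n where "n = M - Suc m"
    have Mn: "M = Suc m + n" using False n_def by simp
    have "(\<Sum>s=1..M. D s * sin ((real s + 1/2) * \<theta>)) =
       (\<Sum>s=1..m. D s * sin ((real s + 1/2) * \<theta>)) + (\<Sum>s=Suc m..Suc m + n. D s * sin ((real s + 1/2) * \<theta>))"
      unfolding Mn using sum.ub_add_nat[of 1 m "\<lambda>s. D s * sin ((real s + 1/2) * \<theta>)" "Suc n"] by simp
    moreover have "\<bar>\<Sum>s=1..m. D s * sin ((real s + 1/2) * \<theta>)\<bar> \<le> 3/2"
      using \<theta> m1 D0 D1 Mn by (intro weighted_sin_sum_short) auto
    moreover have "\<bar>\<Sum>s=Suc m..Suc m + n. D s * sin ((real s + 1/2) * \<theta>)\<bar> \<le> pi"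
      using \<theta> m2 D0 Dm Mn D1[of "Suc m"] by (intro weighted_sin_sum_tail) (auto simp: add.commute)
    ultimately show ?thesis by linarith
  qed
qed

lemma parts_identity:
  fixes f g :: "nat \<Rightarrow> real"
  shows "(\<Sum>s=1..Suc n. f s * (g s - g (s - 1))) = f (Suc n) * g (Suc n) - f 1 * g 0 - (\<Sum>s=1..n. (f (Suc s) - f s) * g s)"
proof (induction n)
  case 0 then show ?case by (simp add: algebra_simps)
next
  case (Suc n)
  have "(\<Sum>s=1..Suc (Suc n). f s * (g s - g (s - 1))) = (\<Sum>s=1..Suc n. f s * (g s - g (s - 1))) + f (Suc (Suc n)) * (g (Suc (Suc n)) - g (Suc n))"
    by simp
  also note Suc.IH
  finally show ?case by (simp add: algebra_simps)
qed

lemma pairing_sum: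
  fixes h :: "nat \<Rightarrow> real"
  assumes sym: "\<And>s. 1 \<le> s \<Longrightarrow> s \<le> 2*M+1 \<Longrightarrow> h (2*M+2 - s) = h s" and mid: "h (M+1) = 0"
  shows "(\<Sum>s=1..2*M+1. h s) = 2 * (\<Sum>s=1..M. h s)"
proof -
  have "(\<Sum>s=1..2*M+1. h s) = (\<Sum>s=1..M. h s) + (\<Sum>s=M+1..M + Suc M. h s)"
    using sum.ub_add_nat[of 1 M h "Suc M"] by (simp add: mult_2)
  also have "(\<Sum>s=M+1..M + Suc M. h s) = h (M+1) + (\<Sum>s=M+2..2*M+1. h s)"
    by (subst sum.atLeast_Suc_atMost) (auto simp: mult_2)
  also have "(\<Sum>s=M+2..2*M+1. h s) = (\<Sum>s=1..M. h s)"
  proof (rule sum.reindex_bij_witness[where i="\<lambda>s. 2*M+2 - s" and j="\<lambda>s. 2*M+2 - s"])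
    fix s assume "s \<in> {M+2..2*M+1}" then show "h (2*M+2 - s) = h s" using sym[of s] by auto
  qed auto
  finally show ?thesis using mid by simp
qed

text \<open>Product-to-sum: multiplying \<open>cos(s\<theta>)\<close> by \<open>2 sin(\<theta>/2)\<close> makes it a difference of
  consecutive terms \<open>sin((s \<plusminus> 1/2)\<theta>)\<close>, the starting point of summation by parts.\<close>
lemma sin_half_times_cos:
  fixes \<theta> :: real assumes "1 \<le> s"
  shows "2 * sin (\<theta>/2) * cos (real s * \<theta>) = sin ((real s + 1/2) * \<theta>) - sin ((real (s - 1) + 1/2) * \<theta>)"
proof -
  have "2 * sin (\<theta>/2) * cos (real s * \<theta>) = sin (\<theta>/2 + real s * \<theta>) + sin (\<theta>/2 - real s * \<theta>)"
    by (simp add: sin_add sin_diff)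
  also have "\<theta>/2 + real s * \<theta> = (real s + 1/2) * \<theta>" by (simp add: algebra_simps)
  also have "\<theta>/2 - real s * \<theta> = - ((real (s - 1) + 1/2) * \<theta>)" using assms by (simp add: algebra_simps of_nat_diff)
  finally show ?thesis by simp
qed

text \<open>Summation by parts for a cosine sum whose weight \<open>f\<close> is symmetric on \<open>1..q-1\<close>, \<open>q = 2M+3\<close>: the two halves pair up and only the increments \<open>f(s+1) - f(s)\<close>, \<open>s \<le> M\<close>, remain.\<close>
lemma cos_sum_by_parts:
  fixes f :: "nat \<Rightarrow> real" and \<theta> :: real and M :: nat
  defines "q \<equiv> 2*M+3"
  assumes fsym: "\<And>s. 1 \<le> s \<Longrightarrow> s \<le> q - 1 \<Longrightarrow> f (q - s) = f s"
    and gsym: "\<And>s. s \<le> q - 1 \<Longrightarrow> sin ((real (q - 1 - s) + 1/2) * \<theta>) = - sin ((real s + 1/2) * \<theta>)"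
  shows "2 * sin (\<theta>/2) * (\<Sum>s=1..q-1. f s * cos (real s * \<theta>))
         = - 2 * f 1 * sin (\<theta>/2) - 2 * (\<Sum>s=1..M. (f (Suc s) - f s) * sin ((real s + 1/2) * \<theta>))"
proof -
  define g where "g = (\<lambda>s::nat. sin ((real s + 1/2) * \<theta>))"
  define D where "D = (\<lambda>s::nat. f (Suc s) - f s)"
  have q1: "q - 1 = Suc (2*M+1)" unfolding q_def by simp
  have "2 * sin (\<theta>/2) * (\<Sum>s=1..q-1. f s * cos (real s * \<theta>)) = (\<Sum>s=1..q-1. f s * (2 * sin (\<theta>/2) * cos (real s * \<theta>)))"
    by (simp add: sum_distrib_left mult.left_commute)
  also have "\<dots> = (\<Sum>s=1..q-1. f s * (g s - g (s - 1)))"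
    by (intro sum.cong refl) (simp add: g_def sin_half_times_cos)
  also have "\<dots> = f (q-1) * g (q-1) - f 1 * g 0 - (\<Sum>s=1..2*M+1. D s * g s)"
    unfolding q1 parts_identity D_def by simp
  also have "f (q-1) = f 1" using fsym[of 1] unfolding q_def by simp
  also have "g (q-1) = - g 0" using gsym[of 0] unfolding g_def by simp
  also have "g 0 = sin (\<theta>/2)" by (simp add: g_def)
  also have "(\<Sum>s=1..2*M+1. D s * g s) = 2 * (\<Sum>s=1..M. D s * g s)"
  proof (rule pairing_sum)
    fix s assume s: "1 \<le> s" "s \<le> 2*M+1"
    have "D (2*M+2 - s) = - D s"
    proof -
      have e: "Suc (2*M+2 - s) = q - s" using s unfolding q_def by arith
      have "f (Suc (2*M+2 - s)) = f (q - s)" by (simp only: e)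
      moreover have "f (2*M+2 - s) = f (q - Suc s)" unfolding q_def by simp
      ultimately show ?thesis using fsym[of s] fsym[of "Suc s"] s unfolding D_def q_def by simp
    qed
    moreover have "g (2*M+2 - s) = - g s" using gsym[of s] s unfolding g_def q_def by simp
    ultimately show "D (2*M+2 - s) * g (2*M+2 - s) = D s * g s" by simp
  next
    have "D (M+1) = - D (M+1)"
    proof -
      have "f (Suc (M+1)) = f (q - (M+1))" unfolding q_def by simp
      also have "\<dots> = f (M+1)" using fsym[of "M+1"] unfolding q_def by simp
      finally show ?thesis unfolding D_def by simp
    qed
    then show "D (M+1) * g (M+1) = 0" by simp
  qed
  finally show ?thesis by (simp add: D_def g_def)
qed

lemma cos_sum_bound:
  fixes f :: "nat \<Rightarrow> real" and \<theta> :: real and M :: nat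
  defines "q \<equiv> 2*M+3"
  assumes \<theta>: "0 < \<theta>" "\<theta> \<le> pi"
    and fsym: "\<And>s. 1 \<le> s \<Longrightarrow> s \<le> q - 1 \<Longrightarrow> f (q - s) = f s"
    and gsym: "\<And>s. s \<le> q - 1 \<Longrightarrow> sin ((real (q - 1 - s) + 1/2) * \<theta>) = - sin ((real s + 1/2) * \<theta>)"
    and D0: "\<And>s. 1 \<le> s \<Longrightarrow> s \<le> M \<Longrightarrow> 0 \<le> f (Suc s) - f s"
    and D1: "\<And>s. 1 \<le> s \<Longrightarrow> s \<le> M \<Longrightarrow> f (Suc s) - f s \<le> 1 / real s"
    and Dm: "\<And>s. 1 \<le> s \<Longrightarrow> s < M \<Longrightarrow> f (Suc (Suc s)) - f (Suc s) \<le> f (Suc s) - f s"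
  shows "\<bar>\<Sum>s=1..q-1. f s * cos (real s * \<theta>)\<bar> \<le> \<bar>f 1\<bar> + (3/2 + pi) / sin (\<theta>/2)"
proof -
  define B where "B = (\<Sum>s=1..M. (f (Suc s) - f s) * sin ((real s + 1/2) * \<theta>))"
  have sp: "sin (\<theta>/2) > 0" using \<theta> by (intro sin_gt_zero) auto
  have B: "\<bar>B\<bar> \<le> 3/2 + pi" unfolding B_def using \<theta> D0 D1 Dm by (intro weighted_sin_sum_bound) auto
  have eq: "2 * sin (\<theta>/2) * (\<Sum>s=1..q-1. f s * cos (real s * \<theta>)) = - 2 * f 1 * sin (\<theta>/2) - 2 * B"
    unfolding B_def q_def using fsym gsym by (intro cos_sum_by_parts) (auto simp: q_def)
  have "2 * sin (\<theta>/2) * \<bar>\<Sum>s=1..q-1. f s * cos (real s * \<theta>)\<bar>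
      = \<bar>2 * sin (\<theta>/2) * (\<Sum>s=1..q-1. f s * cos (real s * \<theta>))\<bar>"
    using sp by (simp add: abs_mult)
  also have "\<dots> = \<bar>- 2 * f 1 * sin (\<theta>/2) - 2 * B\<bar>" by (simp only: eq)
  also have "\<dots> \<le> \<bar>- 2 * f 1 * sin (\<theta>/2)\<bar> + \<bar>2 * B\<bar>" by (rule abs_triangle_ineq4)
  also have "\<dots> \<le> 2 * \<bar>f 1\<bar> * sin (\<theta>/2) + 2 * (3/2 + pi)" using B sp by (simp add: abs_mult)
  finally show ?thesis using sp by (simp add: field_simps)
qed

section \<open>The Fourier coefficients of log|1 - e_q|\<close>

text \<open>The profile \<open>s \<mapsto> log(2 sin(\<pi>s/q))\<close> on \<open>1 \<le> s \<le> (q-1)/2\<close>: its increments are nonnegative, ...\<close>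
lemma logsin_step_nonneg:
  assumes q: "q > 0" and s: "1 \<le> s" "2 * (s + 1) \<le> q"
  shows "ln (2 * sin (pi * real s / real q)) \<le> ln (2 * sin (pi * real (Suc s) / real q))"
proof -
  define x where "x = pi * real s / real q"
  define y where "y = pi * real (Suc s) / real q"
  have xy: "0 < x" "x \<le> y" "y \<le> pi/2" using q s pi_frac_le_half[OF q, of "Suc s"] pi_frac_mono[of s "Suc s" q]
    by (auto simp: x_def y_def)
  have "sin x \<le> sin y"
    using xy by (subst sin_mono_le_eq) auto
  moreover have "0 < sin x" using xy by (intro sin_gt_zero) auto
  ultimately show ?thesis by (simp add: x_def y_def)
qed

text \<open>... at most \<open>1/s\<close> (from the monotonicity of \<open>sin x / x\<close>), ...\<close>
lemma logsin_step_le: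
  assumes q: "q > 0" and s: "1 \<le> s" "2 * (s + 1) \<le> q"
  shows "ln (2 * sin (pi * real (Suc s) / real q)) - ln (2 * sin (pi * real s / real q)) \<le> 1 / real s"
proof -
  define x where "x = pi * real s / real q"
  define y where "y = pi * real (Suc s) / real q"
  have xy: "0 < x" "x \<le> y" "y \<le> pi/2" using q s pi_frac_le_half[OF q, of "Suc s"] pi_frac_mono[of s "Suc s" q]
    by (auto simp: x_def y_def)
  have sx: "sin x > 0" "sin y > 0" using xy by (auto intro!: sin_gt_zero)
  have "sin y / y \<le> sin x / x" using xy by (intro sinc_antimono) auto
  then have "sin y / sin x \<le> y / x" using xy sx by (simp add: field_simps)
  also have "y / x = (real s + 1) / real s" using q s by (simp add: x_def y_def field_simps)
  finally have rat: "sin y / sin x \<le> (real s + 1) / real s" .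
  have "ln (2 * sin y) - ln (2 * sin x) = ln (sin y / sin x)"
    using sx by (simp add: ln_div ln_mult)
  also have "\<dots> \<le> sin y / sin x - 1" using sx by (intro ln_le_minus_one) auto
  also have "\<dots> \<le> (real s + 1) / real s - 1" using rat by simp
  also have "\<dots> = 1 / real s" using s by (simp add: field_simps)
  finally show ?thesis by (simp add: x_def y_def)
qed

text \<open>... and nonincreasing (log-concavity of \<open>sin\<close>).\<close>
lemma logsin_step_decreasing:
  assumes q: "q > 0" and s: "1 \<le> s" "s + 2 < q"
  shows "ln (2 * sin (pi * real (Suc (Suc s)) / real q)) - ln (2 * sin (pi * real (Suc s) / real q))
         \<le> ln (2 * sin (pi * real (Suc s) / real q)) - ln (2 * sin (pi * real s / real q))"
proof -
  define a where "a = pi * real s / real q"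
  define b where "b = pi * real (Suc s) / real q"
  define c2 where "c2 = pi * real (Suc (Suc s)) / real q"
  define d where "d = pi / real q"
  have pos: "sin a > 0" "sin b > 0" "sin c2 > 0"
    using q s unfolding a_def b_def c2_def by (auto intro!: sin_gt_zero pi_frac_lt simp del: of_nat_Suc)
  have "c2 = b + d" "a = b - d" using q by (auto simp: a_def b_def c2_def d_def field_simps)
  then have "sin c2 * sin a = (sin b)^2 - (sin d)^2" by (simp add: sin_add_mult_sin_diff)
  then have "sin c2 * sin a \<le> sin b * sin b" by (simp add: power2_eq_square)
  then have "(2 * sin c2) * (2 * sin a) \<le> (2 * sin b) * (2 * sin b)" by simp
  then have "ln ((2 * sin c2) * (2 * sin a)) \<le> ln ((2 * sin b) * (2 * sin b))"
    using pos by (subst ln_le_cancel_iff) auto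
  then have "ln (2 * sin c2) + ln (2 * sin a) \<le> ln (2 * sin b) + ln (2 * sin b)"
    using pos by (simp add: ln_mult)
  then show ?thesis by (simp add: a_def b_def c2_def)
qed

text \<open>Since \<open>logchord q\<close> is even, its Fourier coefficients are real cosine sums.\<close>
lemma fcoef_cos:
  assumes q: "q > 0"
  shows "fcoef q k = of_real ((\<Sum>s\<in>{1..q-1}. logchord q (int s) * cos (real s * (2 * pi * real k / real q))) / real q)"
proof -
  define \<theta> where "\<theta> = 2 * pi * real k / real q"
  have e: "of_real (logchord q (int s)) * echar q (- (real k * real s)) = of_real (logchord q (int s) * cos (real s * \<theta>)) - \<i> * of_real (logchord q (int s) * sin (real s * \<theta>))" for s
  proof -
    have "2 * pi * (- (real k * real s)) / real q = - (real s * \<theta>)" by (simp add: \<theta>_def)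
    then show ?thesis by (simp add: echar_def complex_eq_iff)
  qed
  define Ss where "Ss = (\<Sum>s\<in>{1..q-1}. logchord q (int s) * sin (real s * \<theta>))"
  have "Ss = (\<Sum>s\<in>{1..q-1}. logchord q (int (q - 1 + 1 - s)) * sin (real (q - 1 + 1 - s) * \<theta>))"
    unfolding Ss_def by (rule sum.atLeastAtMost_rev)
  also have "\<dots> = (\<Sum>s\<in>{1..q-1}. - (logchord q (int s) * sin (real s * \<theta>)))"
  proof (intro sum.cong refl)
    fix s assume s: "s \<in> {1..q-1}"
    have "s \<le> q" using s by auto
    then have rq: "real (q - s) = real q - real s" by (rule of_nat_diff)
    have "real (q - s) * \<theta> = 2 * pi * real k - real s * \<theta>" using q unfolding rq \<theta>_def by (simp add: field_simps)
    then have "sin (real (q - s) * \<theta>) = - sin (real s * \<theta>)" by (simp add: sin_2pik_minus)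
    moreover have "logchord q (int (q - s)) = logchord q (int s)" using s by (intro logchord_sym) auto
    moreover have "q - 1 + 1 - s = q - s" using q by simp
    ultimately show "logchord q (int (q - 1 + 1 - s)) * sin (real (q - 1 + 1 - s) * \<theta>) = - (logchord q (int s) * sin (real s * \<theta>))"
      by simp
  qed
  also have "\<dots> = - Ss" unfolding Ss_def by (simp add: sum_negf)
  finally have "Ss = 0" by simp
  have "fcoef q k = (\<Sum>s\<in>{1..q-1}. of_real (logchord q (int s) * cos (real s * \<theta>)) - \<i> * of_real (logchord q (int s) * sin (real s * \<theta>))) / of_nat q"
    unfolding fcoef_def by (simp add: e)
  also have "\<dots> = (of_real (\<Sum>s\<in>{1..q-1}. logchord q (int s) * cos (real s * \<theta>)) - \<i> * of_real Ss) / of_nat q"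
    by (simp add: sum_subtractf sum_distrib_left Ss_def)
  finally show ?thesis using \<open>Ss = 0\<close> by (simp add: \<theta>_def)
qed

text \<open>The cosine sums of \<open>logchord q\<close> at the frequencies \<open>\<theta> = 2\<pi>k/q\<close>, \<open>0 < 2k < q\<close>:
  \<open>s \<mapsto> log(2 sin(\<pi>s/q))\<close> is symmetric and discretely concave, so \<open>cos_sum_bound\<close> applies.\<close>
lemma logchord_cos_sum_bound:
  fixes M k :: nat
  defines "q \<equiv> 2*M+3" and "\<theta> \<equiv> 2 * pi * real k / real (2*M+3)"
  assumes k: "1 \<le> k" "2 * k < q"
  shows "\<bar>\<Sum>s=1..q-1. logchord q (int s) * cos (real s * \<theta>)\<bar>
         \<le> \<bar>logchord q 1\<bar> + (3/2 + pi) / sin (\<theta>/2)"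
proof -
  define f where "f = (\<lambda>s::nat. logchord q (int s))"
  have q0: "q > 0" by (simp add: q_def)
  have th: "0 < \<theta>" "\<theta> \<le> pi"
  proof -
    show "0 < \<theta>" using k q0 by (simp add: \<theta>_def)
    have "2 * pi * real k / real q = pi * real (2 * k) / real q" by simp
    also have "\<dots> < pi" using k q0 by (intro pi_frac_lt) auto
    finally show "\<theta> \<le> pi" by (simp add: \<theta>_def q_def)
  qed
  have ff: "f s = ln (2 * sin (pi * real s / real q))" if "0 < s" "s < q" for s
    unfolding f_def using that by (rule logchord_formula)
  have "\<bar>\<Sum>s=1..2*M+3-1. f s * cos (real s * \<theta>)\<bar> \<le> \<bar>f 1\<bar> + (3/2 + pi) / sin (\<theta>/2)"
  proof (rule cos_sum_bound[OF th])
    fix s assume "1 \<le> s" "s \<le> 2*M+3-1"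
    then show "f (2*M+3 - s) = f s" unfolding f_def q_def by (intro logchord_sym) auto
  next
    fix s assume s: "s \<le> 2*M+3-1"
    have r: "real (2*M+3 - 1 - s) = real (2*M+3) - (real s + 1)" using s by (simp add: of_nat_diff)
    have "(real (2*M+3 - 1 - s) + 1/2) * \<theta> = 2 * pi * real k - (real s + 1/2) * \<theta>"
      unfolding r \<theta>_def by (simp add: field_simps)
    then show "sin ((real (2*M+3 - 1 - s) + 1/2) * \<theta>) = - sin ((real s + 1/2) * \<theta>)"
      by (simp add: sin_2pik_minus)
  next
    fix s assume s: "1 \<le> s" "s \<le> M"
    then have "2 * (s + 1) \<le> q" "Suc s < q" by (auto simp: q_def)
    then show "0 \<le> f (Suc s) - f s" using s q0 logsin_step_nonneg[OF q0 s(1)] ff[of s] ff[of "Suc s"] by auto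
  next
    fix s assume s: "1 \<le> s" "s \<le> M"
    then have "2 * (s + 1) \<le> q" "Suc s < q" by (auto simp: q_def)
    then show "f (Suc s) - f s \<le> 1 / real s" using s q0 logsin_step_le[OF q0 s(1)] ff[of s] ff[of "Suc s"] by auto
  next
    fix s assume s: "1 \<le> s" "s < M"
    then have "s + 2 < q" by (auto simp: q_def)
    then show "f (Suc (Suc s)) - f (Suc s) \<le> f (Suc s) - f s"
      using s q0 logsin_step_decreasing[OF q0 s(1)] ff[of s] ff[of "Suc s"] ff[of "Suc (Suc s)"] by auto
  qed
  then show ?thesis by (simp add: f_def q_def)
qed

lemma fcoef_bound_low_freq:
  fixes M k :: nat
  assumes k: "1 \<le> k" "2 * k < 2*M+3"
  shows "cmod (fcoef (2*M+3) k) \<le> \<bar>logchord (2*M+3) 1\<bar> / real (2*M+3) + (3/2 + pi) / (2 * real k)"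
proof -
  define q where "q = 2*M+3"
  define \<theta> where "\<theta> = 2 * pi * real k / real q"
  define f where "f = (\<lambda>s::nat. logchord q (int s))"
  have q0: "q > 0" by (simp add: q_def)
  have kq: "2 * k < q" using k by (simp add: q_def)
  have cs: "\<bar>\<Sum>s=1..q-1. f s * cos (real s * \<theta>)\<bar> \<le> \<bar>f 1\<bar> + (3/2 + pi) / sin (\<theta>/2)"
    using logchord_cos_sum_bound[of k M] k unfolding f_def \<theta>_def q_def by simp
  have sl: "2 * real k / real q \<le> sin (\<theta>/2)"
  proof -
    have "\<theta>/2 = pi * real k / real q" by (simp add: \<theta>_def)
    moreover have "pi * real k / real q \<le> pi / 2" using kq q0 by (intro pi_frac_le_half) auto
    moreover have "0 \<le> pi * real k / real q" by simp
    ultimately have "2 / pi * (pi * real k / real q) \<le> sin (pi * real k / real q)" by (intro jordan_inequality)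
    then show ?thesis using \<open>\<theta>/2 = pi * real k / real q\<close> by simp
  qed
  have slp: "0 < 2 * real k / real q" using k q0 by simp
  have "(3/2 + pi) / sin (\<theta>/2) \<le> (3/2 + pi) / (2 * real k / real q)"
  proof -
    have "0 < sin (\<theta>/2)" using sl slp by linarith
    then have h: "0 < sin (\<theta>/2) * (2 * real k / real q)" using slp by (rule mult_pos_pos)
    show ?thesis by (rule divide_left_mono[OF sl]) (use h pi_gt_zero in auto)
  qed
  then have cs2: "\<bar>\<Sum>s=1..q-1. f s * cos (real s * \<theta>)\<bar> \<le> \<bar>f 1\<bar> + (3/2 + pi) / (2 * real k / real q)"
    using cs unfolding q_def by simp
  have "cmod (fcoef q k) = \<bar>(\<Sum>s=1..q-1. f s * cos (real s * \<theta>)) / real q\<bar>"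
    unfolding fcoef_cos[OF q0] f_def \<theta>_def by (rule norm_of_real)
  also have "\<dots> = \<bar>\<Sum>s=1..q-1. f s * cos (real s * \<theta>)\<bar> / real q" by (simp only: abs_divide abs_of_nat)
  also have "\<dots> \<le> (\<bar>f 1\<bar> + (3/2 + pi) / (2 * real k / real q)) / real q"
    using cs2 q0 by (intro divide_right_mono) auto
  also have "\<dots> = \<bar>f 1\<bar> / real q + (3/2 + pi) / (2 * real k)"
    using q0 k by (simp add: field_simps)
  finally show ?thesis by (simp add: f_def q_def)
qed

lemma fcoef_sym:
  assumes "0 < k" "k < q"
  shows "fcoef q (q - k) = fcoef q k"
proof -
  have q0: "q > 0" using assms by simp
  have "cos (real s * (2 * pi * real (q - k) / real q)) = cos (real s * (2 * pi * real k / real q))" for s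
  proof -
    have r: "real (q - k) = real q - real k" using assms by (simp add: of_nat_diff)
    have "real s * (2 * pi * real (q - k) / real q) = 2 * pi * real s - real s * (2 * pi * real k / real q)"
      unfolding r using q0 by (simp add: field_simps)
    then show ?thesis by (simp add: cos_2pik_minus)
  qed
  then show ?thesis unfolding fcoef_cos[OF q0] by simp
qed

lemma fcoef_bound:
  fixes M k :: nat
  assumes k: "1 \<le> k" "k \<le> 2*M+2"
  shows "cmod (fcoef (2*M+3) k) \<le> \<bar>logchord (2*M+3) 1\<bar> / real (2*M+3) + (3/2 + pi) / 2 * (1 / real k + 1 / real (2*M+3 - k))"
proof (cases "2 * k < 2*M+3")
  case True
  have "cmod (fcoef (2*M+3) k) \<le> \<bar>logchord (2*M+3) 1\<bar> / real (2*M+3) + (3/2 + pi) / (2 * real k)"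
    using fcoef_bound_low_freq[OF k(1) True] .
  also have "(3/2 + pi) / (2 * real k) \<le> (3/2 + pi) / 2 * (1 / real k + 1 / real (2*M+3 - k))"
  proof -
    have "(3/2 + pi) / 2 * (1 / real k) \<le> (3/2 + pi) / 2 * (1 / real k + 1 / real (2*M+3 - k))"
      using pi_gt_zero by (intro mult_left_mono) auto
    then show ?thesis by simp
  qed
  finally show ?thesis by simp
next
  case False
  define k' where "k' = 2*M+3 - k"
  have "2*M+3 < 2*k" using False by presburger
  then have k': "1 \<le> k'" "2 * k' < 2*M+3" "2*M+3 - k' = k" using k by (auto simp: k'_def)
  have "cmod (fcoef (2*M+3) k) = cmod (fcoef (2*M+3) k')"
    using fcoef_sym[of k "2*M+3"] k by (simp add: k'_def)
  also have "\<dots> \<le> \<bar>logchord (2*M+3) 1\<bar> / real (2*M+3) + (3/2 + pi) / (2 * real k')"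
    using fcoef_bound_low_freq[OF k'(1,2)] .
  also have "(3/2 + pi) / (2 * real k') \<le> (3/2 + pi) / 2 * (1 / real k + 1 / real (2*M+3 - k))"
  proof -
    have "(3/2 + pi) / 2 * (1 / real k') \<le> (3/2 + pi) / 2 * (1 / real k + 1 / real k')"
      using pi_gt_zero by (intro mult_left_mono) auto
    then show ?thesis by (simp add: k'_def)
  qed
  finally show ?thesis by simp
qed

text \<open>\<open>\<Prod>\<^sub>0\<^sub><\<^sub>s\<^sub><\<^sub>q (1 - \<zeta>\<^sup>s) = q\<close> for \<open>\<zeta> = e\<^sub>q(1)\<close>: the value at \<open>1\<close> of \<open>(x\<^sup>q - 1)/(x - 1)\<close>.\<close>
lemma prod_one_minus_roots:
  assumes q: "q > 1"
  shows "(\<Prod>s\<in>{1..q-1}. (1 - cis (2 * pi * real s / real q))) = of_nat q"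
proof -
  define P :: "complex poly" where "P = monom 1 q + [:-1:]"
  define w where "w = (\<lambda>k::nat. cis (2 * pi * real k / real q))"
  have polyP: "poly P x = x ^ q - 1" for x by (simp add: P_def poly_monom)
  have dP: "pderiv P = monom (of_nat q) (q - 1)" by (simp add: P_def pderiv_add pderiv_monom pderiv_pCons)
  have lc: "lead_coeff P = 1"
  proof -
    have "lead_coeff ([:-1:] + monom (1::complex) q) = lead_coeff (monom (1::complex) q)"
      using q by (intro lead_coeff_add_le) (simp add: degree_monom_eq)
    then show ?thesis unfolding P_def by (metis add.commute lead_coeff_monom)
  qed
  have rsf: "rsquarefree P"
    unfolding rsquarefree_roots
  proof (intro allI notI)
    fix a assume "poly P a = 0 \<and> poly (pderiv P) a = 0"
    then have "a ^ q = 1" "of_nat q * a ^ (q - 1) = 0" by (auto simp: polyP dP poly_monom)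
    then show False using q by (cases "a = 0") (auto simp: power_0_left)
  qed
  have "P = (\<Prod>z|poly P z = 0. [:-z, 1:])"
    using complex_poly_decompose_rsquarefree[OF rsf] lc by simp
  also have "{z. poly P z = 0} = {z. z ^ q = 1}" by (simp add: polyP)
  also have "(\<Prod>z\<in>{z. z ^ q = 1}. [:-z, 1:]) = (\<Prod>k<q. [:- w k, 1:])"
    unfolding w_def using q by (intro prod.reindex_bij_betw [symmetric] Complex.bij_betw_roots_unity) auto
  also have "{..<q} = insert 0 {1..q-1}" using q by auto
  also have "(\<Prod>k\<in>insert 0 {1..q-1}. [:- w k, 1:]) = [:-1, 1:] * (\<Prod>k\<in>{1..q-1}. [:- w k, 1:])"
    by (subst prod.insert) (auto simp: w_def)
  finally have Pf: "P = [:-1, 1:] * (\<Prod>k\<in>{1..q-1}. [:- w k, 1:])" .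
  define Q where "Q = (\<Prod>k\<in>{1..q-1}. [:- w k, 1:])"
  have "pderiv P = [:-1, 1:] * pderiv Q + Q * pderiv [:-1, 1:]" using Pf unfolding Q_def[symmetric]
    by (simp only: pderiv_mult)
  also have "pderiv [:-1, 1:] = (1 :: complex poly)" by (simp add: pderiv_pCons)
  finally have "pderiv P = [:-1, 1:] * pderiv Q + Q" by simp
  then have "poly (pderiv P) 1 = poly Q 1" by simp
  also have "poly (pderiv P) 1 = of_nat q" by (simp add: dP poly_monom)
  finally have "poly Q 1 = of_nat q" by simp
  moreover have "poly Q 1 = (\<Prod>s\<in>{1..q-1}. (1 - w s))" by (simp add: Q_def poly_prod)
  ultimately show ?thesis by (simp add: w_def)
qed

lemma fcoef_0_eq:
  assumes q: "q > 1"
  shows "fcoef q 0 = of_real (ln (real q) / real q)"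
proof -
  have nz: "cmod (1 - echar q (real s)) \<noteq> 0" if "s \<in> {1..q-1}" for s
  proof -
    have s: "0 < s" "s < q" using that q by auto
    have "0 < sin (pi * real s / real q)" using s by (intro sin_gt_zero pi_frac_lt) auto
    then show ?thesis using norm_1_minus_echar[OF s] by simp
  qed
  have "(\<Sum>s\<in>{1..q-1}. logchord q (int s)) = ln (\<Prod>s\<in>{1..q-1}. cmod (1 - echar q (real s)))"
    unfolding logchord_def using nz by (subst ln_prod) auto
  also have "(\<Prod>s\<in>{1..q-1}. cmod (1 - echar q (real s))) = cmod (\<Prod>s\<in>{1..q-1}. (1 - echar q (real s)))"
    by (simp add: prod_norm)
  also have "(\<Prod>s\<in>{1..q-1}. (1 - echar q (real s))) = of_nat q"
    unfolding echar_def using prod_one_minus_roots[OF q] by simp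
  finally have "(\<Sum>s\<in>{1..q-1}. logchord q (int s)) = ln (real q)" by simp
  moreover have "fcoef q 0 = of_real (\<Sum>s\<in>{1..q-1}. logchord q (int s)) / of_nat q"
    unfolding fcoef_def by (simp add: echar_def)
  ultimately show ?thesis by simp
qed

lemma logchord_1_bound:
  assumes q: "q \<ge> 3"
  shows "\<bar>logchord q 1\<bar> \<le> ln (real q)"
proof -
  define x where "x = 2 * sin (pi / real q)"
  have "logchord q 1 = ln x" using logchord_formula[of 1 q] q by (simp add: x_def)
  have a: "0 \<le> pi / real q" "pi / real q \<le> pi / 2" using q by (auto simp: field_simps)
  have "2 / pi * (pi / real q) \<le> sin (pi / real q)" using a by (rule jordan_inequality)
  then have lo: "4 / real q \<le> x" using q by (simp add: x_def)
  have "sin (pi / real q) \<le> 1" by simp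
  moreover have "3 \<le> real q" using q by simp
  ultimately have hi: "x \<le> real q" unfolding x_def by linarith
  have "0 < 4 / real q" using q by simp
  then have xp: "0 < x" using lo by linarith
  have "1 / real q \<le> x" using lo q by (simp add: field_simps)
  then have "ln (1 / real q) \<le> ln x" using q xp by (subst ln_le_cancel_iff) auto
  then have l1: "- ln (real q) \<le> ln x" using q by (simp add: ln_div)
  have l2: "ln x \<le> ln (real q)" using hi xp by simp
  show ?thesis using l1 l2 \<open>logchord q 1 = ln x\<close> by simp
qed

lemma fcoef_abs_sum_explicit:
  fixes M :: nat
  defines "q \<equiv> 2*M+3"
  shows "(\<Sum>k\<in>{1..q-1}. cmod (fcoef q k)) \<le> \<bar>logchord q 1\<bar> + (3/2 + pi) * (1 + ln (real q))"
proof -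
  have "(\<Sum>k\<in>{1..q-1}. cmod (fcoef q k)) \<le> (\<Sum>k\<in>{1..q-1}. \<bar>logchord q 1\<bar> / real q + (3/2 + pi) / 2 * (1 / real k + 1 / real (q - k)))"
    unfolding q_def by (intro sum_mono fcoef_bound) auto
  also have "\<dots> = (\<Sum>k\<in>{1..q-1}. \<bar>logchord q 1\<bar> / real q) + (3/2 + pi) / 2 * (\<Sum>k\<in>{1..q-1}. (1 / real k + 1 / real (q - k)))"
    by (subst sum.distrib) (simp only: sum_distrib_left)
  also have "(\<Sum>k\<in>{1..q-1}. \<bar>logchord q 1\<bar> / real q) = real (q - 1) * (\<bar>logchord q 1\<bar> / real q)" by simp
  also have "real (q - 1) * (\<bar>logchord q 1\<bar> / real q) \<le> \<bar>logchord q 1\<bar>"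
  proof -
    have "real (q - 1) / real q \<le> 1" by (simp add: q_def)
    then have "real (q - 1) / real q * \<bar>logchord q 1\<bar> \<le> 1 * \<bar>logchord q 1\<bar>" by (intro mult_right_mono) auto
    then show ?thesis by simp
  qed
  also have "(3/2 + pi) / 2 * (\<Sum>k\<in>{1..q-1}. (1 / real k + 1 / real (q - k))) \<le> (3/2 + pi) / 2 * (2 * (1 + ln (real q)))"
    using pi_gt_zero by (intro mult_left_mono reciprocal_pair_sum_le) (auto simp: q_def)
  also have "(3/2 + pi) / 2 * (2 * (1 + ln (real q))) = (3/2 + pi) * (1 + ln (real q))" by simp
  finally show ?thesis by simp
qed

lemma fcoef_abs_sum_le:
  fixes M :: nat
  defines "q \<equiv> 2*M+3"
  shows "(\<Sum>k\<in>{1..q-1}. cmod (fcoef q k)) \<le> 12 * ln (real q)"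
proof -
  have L1: "1 \<le> ln (real q)" using ln_ge_1[of q] by (simp add: q_def)
  have "(\<Sum>k\<in>{1..q-1}. cmod (fcoef q k)) \<le> \<bar>logchord q 1\<bar> + (3/2 + pi) * (1 + ln (real q))"
    unfolding q_def by (rule fcoef_abs_sum_explicit)
  also have "\<bar>logchord q 1\<bar> \<le> ln (real q)" by (rule logchord_1_bound) (simp add: q_def)
  also have "(3/2 + pi) * (1 + ln (real q)) \<le> (3/2 + 4) * (2 * ln (real q))"
    using pi_less_4 L1 pi_gt_zero by (intro mult_mono) auto
  finally show ?thesis by simp
qed

section \<open>Weyl differencing for quadratic phases\<close>

lemma regroup_by_difference:
  fixes G :: "int \<Rightarrow> int \<Rightarrow> complex" and N :: int
  shows "(\<Sum>l'\<in>{1..N}. \<Sum>l\<in>{1..N}. G l l') = (\<Sum>h\<in>{-N..N}. \<Sum>l'\<in>{l'. 1 \<le> l' \<and> l' \<le> N \<and> 1 \<le> l'+h \<and> l'+h \<le> N}. G (l'+h) l')"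
proof -
  define J where "J = (\<lambda>h. {l'. 1 \<le> l' \<and> l' \<le> N \<and> 1 \<le> l'+h \<and> l'+h \<le> N})"
  have fJ: "finite (J h)" for h unfolding J_def by (rule finite_subset[of _ "{1..N}"]) auto
  have "(\<Sum>l'\<in>{1..N}. \<Sum>l\<in>{1..N}. G l l') = (\<Sum>(l',l)\<in>{1..N}\<times>{1..N}. G l l')"
    by (rule sum.cartesian_product)
  also have "\<dots> = (\<Sum>(h,l')\<in>Sigma {-N..N} J. G (l'+h) l')"
  proof (rule sum.reindex_bij_witness[where i="\<lambda>(h,l'). (l', l'+h)" and j="\<lambda>(l',l). (l - l', l')"])
  qed (auto simp: J_def)
  also have "\<dots> = (\<Sum>h\<in>{-N..N}. \<Sum>l'\<in>J h. G (l'+h) l')"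
    by (rule sum.Sigma[symmetric]) (auto simp: fJ)
  finally show ?thesis unfolding J_def .
qed

text \<open>For \<open>b\<close> prime to \<open>q\<close> and \<open>N < q\<close>, \<open>h \<mapsto> bh mod q\<close> maps \<open>1..N\<close> injectively into \<open>1..q-1\<close>; so a sum of a nonnegative \<open>\<phi>\<close> over these residues is at most its full sum.\<close>
lemma sum_over_residues_le:
  fixes b :: int and \<phi> :: "nat \<Rightarrow> real"
  assumes q: "prime q" and nd: "\<not> int q dvd b" and N: "N < q"
    and \<phi>0: "\<And>u. u \<in> {1..q-1} \<Longrightarrow> 0 \<le> \<phi> u"
  shows "(\<Sum>h\<in>{1..int N}. \<phi> (nat ((b * h) mod int q))) \<le> (\<Sum>u\<in>{1..q-1}. \<phi> u)"
proof -
  define \<rho> where "\<rho> = (\<lambda>h. nat ((b * h) mod int q))"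
  have qp: "q > 0" using q prime_gt_0_nat by blast
  have pq: "prime (int q)" using q by simp
  have inj: "inj_on \<rho> {1..int N}"
  proof (rule inj_onI)
    fix h h' assume h: "h \<in> {1..int N}" "h' \<in> {1..int N}" and e: "\<rho> h = \<rho> h'"
    have "(b * h) mod int q \<ge> 0" "(b * h') mod int q \<ge> 0" using qp by auto
    then have "(b * h) mod int q = (b * h') mod int q" using e unfolding \<rho>_def by simp
    then have "int q dvd b * (h - h')" by (simp add: mod_eq_dvd_iff right_diff_distrib)
    then have dv: "int q dvd (h - h')" using pq nd by (simp add: prime_dvd_mult_iff)
    have lt: "\<bar>h - h'\<bar> < int q" using h N by auto
    have "h - h' = 0"
    proof (rule ccontr)
      assume "h - h' \<noteq> 0"
      then have "\<bar>int q\<bar> \<le> \<bar>h - h'\<bar>" using dv by (rule dvd_imp_le_int)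
      then show False using lt by simp
    qed
    then show "h = h'" by simp
  qed
  have img: "\<rho> ` {1..int N} \<subseteq> {1..q-1}"
  proof
    fix u assume "u \<in> \<rho> ` {1..int N}"
    then obtain h where h: "h \<in> {1..int N}" "u = \<rho> h" by auto
    have "\<not> int q dvd h"
    proof
      assume "int q dvd h" then have "int q \<le> h" using h by (intro zdvd_imp_le) auto
      then show False using h N by simp
    qed
    then have "\<not> int q dvd b * h" using pq nd by (simp add: prime_dvd_mult_iff)
    then have "(b * h) mod int q \<noteq> 0" "(b * h) mod int q \<ge> 0" "(b * h) mod int q < int q"
      using qp by (auto simp: dvd_eq_mod_eq_0)
    then show "u \<in> {1..q-1}" using h unfolding \<rho>_def by auto
  qed
  have "(\<Sum>h\<in>{1..int N}. \<phi> (\<rho> h)) = (\<Sum>u\<in>\<rho> ` {1..int N}. \<phi> u)"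
    using inj by (simp add: sum.reindex)
  also have "\<dots> \<le> (\<Sum>u\<in>{1..q-1}. \<phi> u)"
    using img \<phi>0 by (intro sum_mono2) auto
  finally show ?thesis unfolding \<rho>_def .
qed

lemma weyl_differencing:
  fixes a :: int and m \<beta> :: "int \<Rightarrow> int" and N q :: nat
  assumes mdiff: "\<And>l h. m (l + h) - m l = h * l + \<beta> h"
  shows "(cmod (\<Sum>l\<in>{1..int N}. echar q (of_int (a * m l))))^2
         \<le> (\<Sum>h\<in>{-int N..int N}. cmod (\<Sum>l\<in>{max 1 (1 - h)..min (int N) (int N - h)}. echar q (of_int ((a * h) * l))))"
proof -
  define T where "T = (\<Sum>l\<in>{1..int N}. echar q (of_int (a * m l)))"
  define J where "J = (\<lambda>h. {l'. 1 \<le> l' \<and> l' \<le> int N \<and> 1 \<le> l'+h \<and> l'+h \<le> int N})"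
  have J: "J h = {max 1 (1 - h)..min (int N) (int N - h)}" for h by (auto simp: J_def)
  have "T * cnj T = (\<Sum>l\<in>{1..int N}. \<Sum>l'\<in>{1..int N}. echar q (of_int (a * m l)) * echar q (- of_int (a * m l')))"
    unfolding T_def by (simp add: sum_product cnj_echar)
  also have "\<dots> = (\<Sum>l'\<in>{1..int N}. \<Sum>l\<in>{1..int N}. echar q (of_int (a * (m l - m l'))))"
    by (subst sum.swap) (simp add: echar_add[symmetric] algebra_simps)
  also have "\<dots> = (\<Sum>h\<in>{-int N..int N}. \<Sum>l'\<in>J h. echar q (of_int (a * (m (l'+h) - m l'))))"
    unfolding J_def by (rule regroup_by_difference)
  also have "\<dots> = (\<Sum>h\<in>{-int N..int N}. echar q (of_int (a * \<beta> h)) * (\<Sum>l'\<in>J h. echar q (of_int ((a * h) * l'))))"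
  proof (intro sum.cong refl)
    fix h
    show "(\<Sum>l'\<in>J h. echar q (of_int (a * (m (l'+h) - m l'))))
        = echar q (of_int (a * \<beta> h)) * (\<Sum>l'\<in>J h. echar q (of_int ((a * h) * l')))"
      unfolding sum_distrib_left by (intro sum.cong refl) (simp add: mdiff echar_add[symmetric] algebra_simps)
  qed
  finally have TT: "T * cnj T = \<dots>" .
  have "(cmod T)^2 = cmod (T * cnj T)"
    using complex_norm_square[of T] by (metis norm_of_real abs_power2 norm_ge_zero power2_abs)
  also have "\<dots> \<le> (\<Sum>h\<in>{-int N..int N}. cmod (\<Sum>l'\<in>J h. echar q (of_int ((a * h) * l'))))"
    unfolding TT by (rule order_trans[OF norm_sum]) (simp add: norm_mult)
  finally show ?thesis unfolding T_def J .
qed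

text \<open>Weyl's bound for a quadratic phase modulo a prime \<open>q\<close>: the diagonal \<open>h = 0\<close>
  gives \<open>N\<close>; for \<open>h \<noteq> 0\<close> the linear sums are geometric, and since \<open>h \<mapsto> ah mod q\<close>
  is injective on \<open>0 < h \<le> N < q\<close> their bounds add up to at most \<open>\<Sum>\<^sub>u \<phi>(u)\<close>
  for each sign of \<open>h\<close>.\<close>
lemma weyl_bound:
  fixes a :: int and m \<beta> :: "int \<Rightarrow> int" and N q :: nat
  assumes q: "prime q" and nd: "\<not> int q dvd a" and N: "N < q"
    and mdiff: "\<And>l h. m (l + h) - m l = h * l + \<beta> h"
  shows "(cmod (\<Sum>l\<in>{1..int N}. echar q (of_int (a * m l))))^2 \<le> real N + real q * (\<Sum>u\<in>{1..q-1}. (1 / real u + 1 / real (q - u)))"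
proof -
  define g where "g = (\<lambda>h. cmod (\<Sum>l\<in>{max 1 (1 - h)..min (int N) (int N - h)}. echar q (of_int ((a * h) * l))))"
  define \<phi> where "\<phi> = (\<lambda>u::nat. real q / 2 * (1 / real u + 1 / real (q - u)))"
  have qp: "q > 0" using q prime_gt_0_nat by blast
  have g_le: "g h \<le> \<phi> (nat ((a * h) mod int q))" if "h \<noteq> 0" "\<bar>h\<bar> \<le> int N" for h
  proof -
    have "\<not> int q dvd h" using that N by (auto dest: dvd_imp_le_int)
    then have "\<not> int q dvd a * h" using q nd by (simp add: prime_dvd_mult_iff)
    then show ?thesis unfolding g_def \<phi>_def by (rule echar_interval_sum_le[OF qp])
  qed
  have "{-int N..int N} = insert 0 ({1..int N} \<union> uminus ` {1..int N})"
    by (auto simp: image_iff intro: exI[of _ "- _"])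
  then have "(\<Sum>h\<in>{-int N..int N}. g h) = g 0 + ((\<Sum>h\<in>{1..int N}. g h) + (\<Sum>h\<in>uminus ` {1..int N}. g h))"
    by (simp only:) (subst sum.insert, auto simp: sum.union_disjoint)
  also have "(\<Sum>h\<in>uminus ` {1..int N}. g h) = (\<Sum>h\<in>{1..int N}. g (- h))"
    by (subst sum.reindex) (auto simp: inj_on_def)
  also have "g 0 \<le> real N"
    unfolding g_def by (rule order_trans[OF norm_sum]) simp
  also have "(\<Sum>h\<in>{1..int N}. g h) \<le> (\<Sum>h\<in>{1..int N}. \<phi> (nat ((a * h) mod int q)))"
    by (intro sum_mono g_le) auto
  also have "(\<Sum>h\<in>{1..int N}. g (- h)) \<le> (\<Sum>h\<in>{1..int N}. \<phi> (nat ((- a * h) mod int q)))"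
    using g_le[of "- h" for h] by (intro sum_mono) auto
  also have "(\<Sum>h\<in>{1..int N}. \<phi> (nat ((a * h) mod int q))) \<le> (\<Sum>u\<in>{1..q-1}. \<phi> u)"
    using q nd N by (intro sum_over_residues_le) (auto simp: \<phi>_def)
  also have "(\<Sum>h\<in>{1..int N}. \<phi> (nat ((- a * h) mod int q))) \<le> (\<Sum>u\<in>{1..q-1}. \<phi> u)"
    using q nd N by (intro sum_over_residues_le) (auto simp: \<phi>_def)
  also have "(\<Sum>u\<in>{1..q-1}. \<phi> u) + (\<Sum>u\<in>{1..q-1}. \<phi> u) = real q * (\<Sum>u\<in>{1..q-1}. (1 / real u + 1 / real (q - u)))"
    unfolding \<phi>_def sum_distrib_left[symmetric] by simp
  finally show ?thesis using weyl_differencing[OF mdiff, of q a N] unfolding g_def by simp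
qed

lemma dilated_weyl_bound:
  fixes q N k :: nat and m \<beta> :: "int \<Rightarrow> int" and b :: int
  assumes q: "prime q" "q > 2" and nd: "\<not> int q dvd b" and N: "N < q" and k: "k \<in> {1..q-1}"
    and mdiff: "\<And>l h. m (l + h) - m l = h * l + \<beta> h"
  shows "cmod (\<Sum>l\<in>{1..int N}. echar q (real k * of_int (b * m l))) \<le> sqrt (5 * real q * ln (real q))"
proof -
  have L1: "1 \<le> ln (real q)" using q by (intro ln_ge_1) auto
  have "\<not> int q dvd int k" using k by (auto dest: dvd_imp_le)
  then have nd': "\<not> int q dvd b * int k" using q nd by (simp add: prime_dvd_mult_iff)
  have "(cmod (\<Sum>l\<in>{1..int N}. echar q (of_int ((b * int k) * m l))))^2
        \<le> real N + real q * (\<Sum>u\<in>{1..q-1}. (1 / real u + 1 / real (q - u)))"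
    using q(1) nd' N mdiff by (rule weyl_bound)
  also have "\<dots> \<le> real q + real q * (2 * (1 + ln (real q)))"
    using N reciprocal_pair_sum_le[of q] q by (intro add_mono mult_left_mono) auto
  also have "\<dots> \<le> 5 * real q * ln (real q)"
    using mult_left_mono[OF L1, of "real q"] by (simp add: algebra_simps)
  finally show ?thesis
    by (intro real_le_rsqrt) (simp add: algebra_simps)
qed

lemma final_estimate:
  fixes q L :: real
  assumes L1: "1 \<le> L" and q1: "1 \<le> q"
  shows "L + 12 * L * sqrt (5 * q * L) \<le> 30 * sqrt (q * L^3)"
proof -
  define R where "R = sqrt (q * L^3)"
  have LW: "L * sqrt (5 * q * L) = sqrt 5 * R"
  proof -
    have "L * sqrt (5 * q * L) = sqrt (L^2 * (5 * q * L))" using L1 by (simp add: real_sqrt_mult)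
    also have "L^2 * (5 * q * L) = 5 * (q * L^3)" by (simp add: power2_eq_square power3_eq_cube algebra_simps)
    finally show ?thesis unfolding R_def by (simp add: real_sqrt_mult)
  qed
  have "1 * 1 \<le> q * L" using q1 L1 by (intro mult_mono) auto
  then have "1 * L^2 \<le> (q * L) * L^2" by (intro mult_right_mono) auto
  then have "L^2 \<le> q * L^3" by (simp add: power2_eq_square power3_eq_cube algebra_simps)
  then have LR: "L \<le> R" unfolding R_def using L1 real_sqrt_le_mono by fastforce
  have s5: "sqrt 5 \<le> 9/4" by (rule real_le_lsqrt) (simp_all add: power2_eq_square)
  have R0: "0 \<le> R" unfolding R_def using L1 q1 by simp
  have "L + 12 * L * sqrt (5 * q * L) = L + 12 * (sqrt 5 * R)" using LW by (simp add: algebra_simps)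
  also have "\<dots> \<le> R + 12 * (9/4 * R)" using LR s5 R0 by (intro add_mono mult_left_mono mult_right_mono) auto
  finally have "L + 12 * L * sqrt (5 * q * L) \<le> 28 * R" by simp
  then show ?thesis using R0 unfolding R_def by linarith
qed

text \<open>The \<open>k = 0\<close> term contributes \<open>c\<^sub>0 N \<le> log q\<close>, every other term
  \<open>\<bar>c\<^sub>k\<bar> \<surd>(5 q log q)\<close>.\<close>
lemma quadratic_logchord_sum_bound:
  fixes q N :: nat and m \<beta> :: "int \<Rightarrow> int" and b :: int
  assumes q: "prime q" "q > 2" and nd: "\<not> int q dvd b" and N: "N < q"
    and mdiff: "\<And>l h. m (l + h) - m l = h * l + \<beta> h"
    and nz: "\<And>l. l \<in> {1..int N} \<Longrightarrow> \<not> int q dvd b * m l"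
  shows "\<bar>\<Sum>l\<in>{1..int N}. logchord q (b * m l)\<bar> \<le> 30 * sqrt (real q * (ln (real q))^3)"
proof -
  define L where "L = ln (real q)"
  define W where "W = sqrt (5 * real q * L)"
  define T where "T = (\<lambda>k::nat. \<Sum>l\<in>{1..int N}. echar q (real k * of_int (b * m l)))"
  have L1: "1 \<le> L" unfolding L_def using q by (intro ln_ge_1) auto
  obtain M where qM: "q = 2*M+3" using q by (rule odd_prime_form)
  have T_le_N: "cmod (T k) \<le> real N" for k
  proof -
    have "cmod (T k) \<le> (\<Sum>l\<in>{1..int N}. 1)" unfolding T_def by (rule order_trans[OF norm_sum]) simp
    then show ?thesis by simp
  qed
  have T_le_W: "cmod (T k) \<le> W" if "k \<in> {1..q-1}" for k
    unfolding T_def W_def L_def using q nd N that mdiff by (rule dilated_weyl_bound)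
  have "of_real (\<Sum>l\<in>{1..int N}. logchord q (b * m l)) = (\<Sum>k<q. fcoef q k * T k)"
    unfolding T_def using q nz by (intro logchord_sum_fourier) auto
  then have "\<bar>\<Sum>l\<in>{1..int N}. logchord q (b * m l)\<bar> = cmod (\<Sum>k<q. fcoef q k * T k)"
    by (metis norm_of_real)
  also have "\<dots> \<le> (\<Sum>k<q. cmod (fcoef q k) * cmod (T k))"
    by (rule order_trans[OF norm_sum]) (simp add: norm_mult)
  also have "{..<q} = insert 0 {1..q-1}" using q by auto
  also have "(\<Sum>k\<in>insert 0 {1..q-1}. cmod (fcoef q k) * cmod (T k))
      = cmod (fcoef q 0) * cmod (T 0) + (\<Sum>k\<in>{1..q-1}. cmod (fcoef q k) * cmod (T k))"
    by (subst sum.insert) auto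
  also have "cmod (fcoef q 0) * cmod (T 0) \<le> L"
  proof -
    have c0: "cmod (fcoef q 0) = L / real q" using q L1 unfolding L_def by (simp add: fcoef_0_eq norm_divide)
    have "cmod (T 0) \<le> real q" using T_le_N[of 0] N by linarith
    then have "L / real q * cmod (T 0) \<le> L / real q * real q" using L1 by (intro mult_left_mono) auto
    then show ?thesis using q c0 by simp
  qed
  also have "(\<Sum>k\<in>{1..q-1}. cmod (fcoef q k) * cmod (T k)) \<le> (\<Sum>k\<in>{1..q-1}. cmod (fcoef q k)) * W"
    unfolding sum_distrib_right by (intro sum_mono mult_left_mono T_le_W) auto
  also have "\<dots> \<le> 12 * L * W"
    using fcoef_abs_sum_le[of M] L1 unfolding qM[symmetric] W_def L_def[symmetric] by (intro mult_right_mono) auto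
  also have "L + 12 * L * W \<le> 30 * sqrt (real q * L^3)" unfolding W_def using L1 q by (intro final_estimate) auto
  finally show ?thesis unfolding L_def by simp
qed

lemma seq_a_cis: "seq_a q p n = cis (- (pi * real_of_int p * (real_of_int n - 1/2)^2 / real q))"
  unfolding seq_a_def cis_conv_exp by simp

text \<open>The quadratic phase of the problem: \<open>(j + l - 1/2)\<^sup>2 - (j - 1/2)\<^sup>2 = 2 tri_phase j l\<close>.\<close>
definition tri_phase :: "int \<Rightarrow> int \<Rightarrow> int" where
  "tri_phase j l = (l * (l + 2 * j - 1)) div 2"

text \<open>\<open>l(l+2j-1)\<close> is even, so the division is exact.\<close>
lemma two_tri_phase: "2 * tri_phase j l = l * (l + 2 * j - 1)"
proof -
  have "even (l * (l + 2 * j - 1))" by auto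
  then show ?thesis unfolding tri_phase_def by simp
qed

lemma tri_phase_diff: "tri_phase j (l + h) - tri_phase j l = h * l + tri_phase j h"
  using two_tri_phase[of j "l + h"] two_tri_phase[of j l] two_tri_phase[of j h]
  by (simp add: algebra_simps)

text \<open>In the range \<open>1 \<le> l \<le> q - 2j\<close> both factors \<open>l\<close> and \<open>l + 2j - 1\<close> lie strictly
  between \<open>0\<close> and \<open>q\<close>, so \<open>b \<cdot> tri_phase j l\<close> is a unit mod \<open>q\<close>: the logarithms are finite.\<close>
lemma tri_phase_not_dvd:
  fixes q :: nat
  assumes q: "prime q" and nd: "\<not> int q dvd b" and j: "1 \<le> j" and l: "l \<in> {1..int q - 2 * j}"
  shows "\<not> int q dvd b * tri_phase j l"
proof
  have pq: "prime (int q)" using q by simp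
  assume "int q dvd b * tri_phase j l"
  then have "int q dvd 2 * tri_phase j l" using pq nd by (simp add: prime_dvd_mult_iff)
  then have "int q dvd l \<or> int q dvd (l + 2 * j - 1)"
    using pq by (simp add: two_tri_phase prime_dvd_mult_iff)
  moreover have "0 < l" "l < int q" "0 < l + 2 * j - 1" "l + 2 * j - 1 < int q" using l j by auto
  ultimately show False by (auto dest: zdvd_imp_le)
qed

lemma seq_a_term:
  "ln (cmod (seq_a q p (j + l) * cnj (seq_a q p j) - 1)) = logchord q ((- p) * tri_phase j l)"
proof -
  have "(real_of_int (j + l) - 1/2)^2 - (real_of_int j - 1/2)^2 = real_of_int (2 * tri_phase j l)"
    unfolding two_tri_phase by (simp add: power2_eq_square algebra_simps)
  moreover have "- (pi * real_of_int p * (real_of_int (j + l) - 1/2)^2 / real q)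
      + pi * real_of_int p * (real_of_int j - 1/2)^2 / real q
      = - (pi * real_of_int p * ((real_of_int (j + l) - 1/2)^2 - (real_of_int j - 1/2)^2) / real q)"
    by (simp add: algebra_simps diff_divide_distrib)
  ultimately have "- (pi * real_of_int p * (real_of_int (j + l) - 1/2)^2 / real q)
      + pi * real_of_int p * (real_of_int j - 1/2)^2 / real q
      = 2 * pi * real_of_int ((- p) * tri_phase j l) / real q"
    by simp
  then have "seq_a q p (j + l) * cnj (seq_a q p j) = echar q (of_int ((- p) * tri_phase j l))"
    unfolding seq_a_cis echar_def by (simp add: cis_cnj cis_mult)
  then show ?thesis unfolding logchord_def by (simp add: norm_minus_commute)
qed

theorem lemma4:
  shows "\<exists>C Q0. \<forall>(q::nat) (p::int) (j::int).
     prime q \<and> q > 2 \<and> q \<ge> Q0 \<and> \<not> (int q dvd p) \<and> 1 \<le> j \<and> real_of_int j < (real q + 2) / 4 \<longrightarrow>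
     \<bar>\<Sum>l\<in>{1..alpha q j - 1}. ln (cmod (seq_a q p (j + l) * cnj (seq_a q p j) - 1))\<bar>
       \<le> C * sqrt (real q * (ln (real q)) ^ 3)"
proof (intro exI[of _ 30] exI[of _ 0] allI impI, elim conjE)
  fix q :: nat and p j :: int
  assume q: "prime q" "q > 2" and nd: "\<not> int q dvd p" and j1: "1 \<le> j"
    and j2: "real_of_int j < (real q + 2) / 4"
  define N where "N = nat (int q - 2 * j)"
  have "real_of_int (4 * j) < real_of_int (int q + 2)" using j2 by simp
  then have "4 * j < int q + 2" by (simp only: of_int_less_iff)
  then have NN: "int N = alpha q j - 1" "int N = int q - 2 * j" and Nq: "N < q"
    using j1 by (auto simp: N_def alpha_def)
  have nd': "\<not> int q dvd - p" using nd by simp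
  have "(\<Sum>l\<in>{1..alpha q j - 1}. ln (cmod (seq_a q p (j + l) * cnj (seq_a q p j) - 1)))
        = (\<Sum>l\<in>{1..int N}. logchord q ((- p) * tri_phase j l))"
    unfolding NN(1) seq_a_term ..
  also have "\<bar>\<dots>\<bar> \<le> 30 * sqrt (real q * (ln (real q))^3)"
    using q nd' Nq tri_phase_diff
    by (rule quadratic_logchord_sum_bound) (use q nd j1 NN(2) tri_phase_not_dvd in auto)
  finally show "\<bar>\<Sum>l\<in>{1..alpha q j - 1}. ln (cmod (seq_a q p (j + l) * cnj (seq_a q p j) - 1))\<bar>
       \<le> 30 * sqrt (real q * (ln (real q)) ^ 3)" .
qed

end
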